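(* Let $\mathsf{K}$ be one of the varieties $\mathsf{ISL}$, $\mathsf{bISL}$, $\mathsf{PDL}$, $\mathsf{IL}$, $\mathsf{HA}$ (defined in the context), and let $\boldsymbol{A} \in \mathsf{K}$. Then there exist a Heyting algebra $\boldsymbol{B}$ and an embedding of $\boldsymbol{A}$ into the reduct $\boldsymbol{B}^-$ of $\boldsymbol{B}$ to the language of $\mathsf{K}$, such that $\boldsymbol{B}^- \in \mathbb{U}(\boldsymbol{A})$, where $\mathbb{U}(\boldsymbol{A}) = \mathbb{I}\mathbb{S}\mathbb{P}_{u}(\boldsymbol{A})$ is the least universal class containing $\boldsymbol{A}$ (equivalently, $\boldsymbol{B}^-$ satisfies every universal first-order sentence true in $\boldsymbol{A}$).
   Context: A semilattice $\langle A;\land\rangle$ is ordered by $a \le b$ iff $a\land b = a$. The varieties are: $\mathsf{ISL}$ (implicative semilattices), algebras $\langle A;\land,\to,1\rangle$ where $\langle A;\land\rangle$ is a semilattice with maximum $1$ and $c\land a\le b \iff c \le a\to b$ for all $a,b,c$; $\mathsf{bISL}$ (bounded implicative semilattices), algebras $\langle A;\land,\to,0,1\rangle$ where $\langle A;\land,\to,1\rangle\in\mathsf{ISL}$ and $0$ is the minimum; $\mathsf{PDL}$ (pseudocomplemented distributive lattices), algebras $\langle A;\land,\lor,\lnot,0,1\rangle$ where $\langle A;\land,\lor\rangle$ is a distributive lattice with minimum $0$ and maximum $1$ and $c\land a = 0 \iff c\le \lnot a$; $\mathsf{IL}$ (implicative lattices), algebras $\langle A;\land,\lor,\to,1\rangle$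 that are lattices whose meet-semilattice reduct with $\to,1$ is in $\mathsf{ISL}$; $\mathsf{HA}$ (Heyting algebras), algebras $\langle A;\land,\lor,\to,0,1\rangle$ that are implicative lattices with minimum $0$. Each of these is the class of subreducts of Heyting algebras in the respective language. The universal class generated by a class of algebras is the class of all algebras satisfying all universal sentences it satisfies; it equals $\mathbb{I}\mathbb{S}\mathbb{P}_u$ of the class (isomorphic copies of subalgebras of ultraproducts). *)

theory Defs
  imports Main
begin

text \<open>An algebra is given by a carrier and interpretations of all symbols
  meet, join, implication, negation, 0, 1. For a variety K only the symbols of
  the language of K are relevant; the others are ignored.\<close>

record 'a halg =
  car :: "'a set"
  mt  :: "'a \<Rightarrow> 'a \<Rightarrow> 'a"
  jn  :: "'a \<Rightarrow> 'a \<Rightarrow> 'a"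
  im  :: "'a \<Rightarrow> 'a \<Rightarrow> 'a"
  ng  :: "'a \<Rightarrow> 'a"
  bt  :: "'a"
  tp  :: "'a"

datatype lang = ISL | bISL | PDL | IL | HA

fun has_join :: "lang \<Rightarrow> bool" where
  "has_join ISL = False" | "has_join bISL = False" | "has_join PDL = True"
| "has_join IL = True" | "has_join HA = True"

fun has_imp :: "lang \<Rightarrow> bool" where
  "has_imp ISL = True" | "has_imp bISL = True" | "has_imp PDL = False"
| "has_imp IL = True" | "has_imp HA = True"

fun has_neg :: "lang \<Rightarrow> bool" where
  "has_neg ISL = False" | "has_neg bISL = False" | "has_neg PDL = True"
| "has_neg IL = False" | "has_neg HA = False"

fun has_bot :: "lang \<Rightarrow> bool" where
  "has_bot ISL = False" | "has_bot bISL = True" | "has_bot PDL = True"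
| "has_bot IL = False" | "has_bot HA = True"

definition hle :: "('a, 'b) halg_scheme \<Rightarrow> 'a \<Rightarrow> 'a \<Rightarrow> bool" where
  "hle A x y \<longleftrightarrow> mt A x y = x"

definition meet_semilattice :: "('a, 'b) halg_scheme \<Rightarrow> bool" where
  "meet_semilattice A \<longleftrightarrow>
     (\<forall>x\<in>car A. \<forall>y\<in>car A. mt A x y \<in> car A) \<and>
     (\<forall>x\<in>car A. \<forall>y\<in>car A. \<forall>z\<in>car A. mt A (mt A x y) z = mt A x (mt A y z)) \<and>
     (\<forall>x\<in>car A. \<forall>y\<in>car A. mt A x y = mt A y x) \<and>
     (\<forall>x\<in>car A. mt A x x = x)"

definition is_lattice :: "('a, 'b) halg_scheme \<Rightarrow> bool" where
  "is_lattice A \<longleftrightarrow> meet_semilattice A \<and>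
     (\<forall>x\<in>car A. \<forall>y\<in>car A. jn A x y \<in> car A) \<and>
     (\<forall>x\<in>car A. \<forall>y\<in>car A. \<forall>z\<in>car A. jn A (jn A x y) z = jn A x (jn A y z)) \<and>
     (\<forall>x\<in>car A. \<forall>y\<in>car A. jn A x y = jn A y x) \<and>
     (\<forall>x\<in>car A. jn A x x = x) \<and>
     (\<forall>x\<in>car A. \<forall>y\<in>car A. mt A x (jn A x y) = x) \<and>
     (\<forall>x\<in>car A. \<forall>y\<in>car A. jn A x (mt A x y) = x)"

definition is_distributive :: "('a, 'b) halg_scheme \<Rightarrow> bool" where
  "is_distributive A \<longleftrightarrow>
     (\<forall>x\<in>car A. \<forall>y\<in>car A. \<forall>z\<in>car A. mt A x (jn A y z) = jn A (mt A x y) (mt A x z))"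

definition top_max :: "('a, 'b) halg_scheme \<Rightarrow> bool" where
  "top_max A \<longleftrightarrow> tp A \<in> car A \<and> (\<forall>x\<in>car A. hle A x (tp A))"

definition bot_min :: "('a, 'b) halg_scheme \<Rightarrow> bool" where
  "bot_min A \<longleftrightarrow> bt A \<in> car A \<and> (\<forall>x\<in>car A. hle A (bt A) x)"

definition residuated :: "('a, 'b) halg_scheme \<Rightarrow> bool" where
  "residuated A \<longleftrightarrow>
     (\<forall>x\<in>car A. \<forall>y\<in>car A. im A x y \<in> car A) \<and>
     (\<forall>a\<in>car A. \<forall>b\<in>car A. \<forall>c\<in>car A. hle A (mt A c a) b \<longleftrightarrow> hle A c (im A a b))"

definition pseudocomplemented :: "('a, 'b) halg_scheme \<Rightarrow> bool" where
  "pseudocomplemented A \<longleftrightarrow>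
     (\<forall>x\<in>car A. ng A x \<in> car A) \<and>
     (\<forall>a\<in>car A. \<forall>c\<in>car A. mt A c a = bt A \<longleftrightarrow> hle A c (ng A a))"

fun in_var :: "lang \<Rightarrow> ('a, 'b) halg_scheme \<Rightarrow> bool" where
  "in_var ISL A \<longleftrightarrow> meet_semilattice A \<and> top_max A \<and> residuated A"
| "in_var bISL A \<longleftrightarrow> meet_semilattice A \<and> top_max A \<and> residuated A \<and> bot_min A"
| "in_var PDL A \<longleftrightarrow> is_lattice A \<and> is_distributive A \<and> bot_min A \<and> top_max A
                      \<and> pseudocomplemented A"
| "in_var IL A \<longleftrightarrow> is_lattice A \<and> top_max A \<and> residuated A"
| "in_var HA A \<longleftrightarrow> is_lattice A \<and> top_max A \<and> residuated A \<and> bot_min A"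

text \<open>Reduct of a Heyting algebra to the language of K: all basic operations are
  kept, and the negation symbol (only used in the language of PDL) is interpreted
  as the term-operation x \<rightarrow> 0.\<close>
definition reduct :: "'a halg \<Rightarrow> 'a halg" where
  "reduct B = B\<lparr>ng := (\<lambda>x. im B x (bt B))\<rparr>"

datatype trm = V nat | TMt trm trm | TJn trm trm | TIm trm trm | TNg trm | TBt | TTp

fun trm_in :: "lang \<Rightarrow> trm \<Rightarrow> bool" where
  "trm_in K (V n) = True"
| "trm_in K (TMt s t) = (trm_in K s \<and> trm_in K t)"
| "trm_in K (TJn s t) = (has_join K \<and> trm_in K s \<and> trm_in K t)"
| "trm_in K (TIm s t) = (has_imp K \<and> trm_in K s \<and> trm_in K t)"
| "trm_in K (TNg s) = (has_neg K \<and> trm_in K s)"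
| "trm_in K TBt = has_bot K"
| "trm_in K TTp = True"

fun eval :: "('a, 'b) halg_scheme \<Rightarrow> (nat \<Rightarrow> 'a) \<Rightarrow> trm \<Rightarrow> 'a" where
  "eval A \<sigma> (V n) = \<sigma> n"
| "eval A \<sigma> (TMt s t) = mt A (eval A \<sigma> s) (eval A \<sigma> t)"
| "eval A \<sigma> (TJn s t) = jn A (eval A \<sigma> s) (eval A \<sigma> t)"
| "eval A \<sigma> (TIm s t) = im A (eval A \<sigma> s) (eval A \<sigma> t)"
| "eval A \<sigma> (TNg s) = ng A (eval A \<sigma> s)"
| "eval A \<sigma> TBt = bt A"
| "eval A \<sigma> TTp = tp A"

text \<open>Quantifier-free formulas; a universal sentence is the universal closure of one.\<close>
datatype fm = FEq trm trm | FNot fm | FAnd fm fm | FOr fm fm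

fun fm_in :: "lang \<Rightarrow> fm \<Rightarrow> bool" where
  "fm_in K (FEq s t) = (trm_in K s \<and> trm_in K t)"
| "fm_in K (FNot p) = fm_in K p"
| "fm_in K (FAnd p q) = (fm_in K p \<and> fm_in K q)"
| "fm_in K (FOr p q) = (fm_in K p \<and> fm_in K q)"

fun holds :: "('a, 'b) halg_scheme \<Rightarrow> (nat \<Rightarrow> 'a) \<Rightarrow> fm \<Rightarrow> bool" where
  "holds A \<sigma> (FEq s t) = (eval A \<sigma> s = eval A \<sigma> t)"
| "holds A \<sigma> (FNot p) = (\<not> holds A \<sigma> p)"
| "holds A \<sigma> (FAnd p q) = (holds A \<sigma> p \<and> holds A \<sigma> q)"
| "holds A \<sigma> (FOr p q) = (holds A \<sigma> p \<or> holds A \<sigma> q)"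

definition univ_true :: "('a, 'b) halg_scheme \<Rightarrow> fm \<Rightarrow> bool" where
  "univ_true A p \<longleftrightarrow> (\<forall>\<sigma>. (\<forall>n. \<sigma> n \<in> car A) \<longrightarrow> holds A \<sigma> p)"

definition in_U :: "lang \<Rightarrow> ('a, 'b) halg_scheme \<Rightarrow> ('c, 'd) halg_scheme \<Rightarrow> bool" where
  "in_U K A C \<longleftrightarrow> (\<forall>p. fm_in K p \<longrightarrow> univ_true A p \<longrightarrow> univ_true C p)"

definition emb :: "lang \<Rightarrow> ('a, 'b) halg_scheme \<Rightarrow> ('c, 'd) halg_scheme \<Rightarrow> ('a \<Rightarrow> 'c) \<Rightarrow> bool" where
  "emb K A C e \<longleftrightarrow>
     e ` car A \<subseteq> car C \<and> inj_on e (car A) \<and>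
     (\<forall>x\<in>car A. \<forall>y\<in>car A. e (mt A x y) = mt C (e x) (e y)) \<and>
     (has_join K \<longrightarrow> (\<forall>x\<in>car A. \<forall>y\<in>car A. e (jn A x y) = jn C (e x) (e y))) \<and>
     (has_imp K \<longrightarrow> (\<forall>x\<in>car A. \<forall>y\<in>car A. e (im A x y) = im C (e x) (e y))) \<and>
     (has_neg K \<longrightarrow> (\<forall>x\<in>car A. e (ng A x) = ng C (e x))) \<and>
     (has_bot K \<longrightarrow> e (bt A) = bt C) \<and>
     e (tp A) = tp C"

end

(* Implicative semilattices and pseudocomplemented distributive lattices are locally finite.
   In the subalgebra S generated by a finite set G, an element is determined by the filters
   of S that are maximal with respect to omitting some element and contain it, and such a
   filter P is determined by finite data: its trace on G together with, for implicative
   semilattices, the strictly larger such filters (which have strictly larger traces), and for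
   pseudocomplemented lattices, the traces of the maximal proper filters above P. A finite
   meet-subsemilattice with top in which relative pseudocomplements exist is a Heyting algebra.
   Hence every finite subset F of A lies in a Heyting algebra whose K-reduct is a K-subalgebra
   of A (for implicative lattices take the principal upset of a lower bound of F, for Heyting
   algebras A itself). Choose such algebras C_xs for F = set xs and an ultrafilter on lists
   in which every element of A eventually occurs. Heyting algebras form a universal class, so
   the ultraproduct of the C_xs is a Heyting algebra; A embeds diagonally into its K-reduct,
   and that reduct, an ultraproduct of K-subalgebras of A, satisfies every universal sentence
   true in A. *)

theory Submission
  imports Defs
begin

section \<open>Meet-semilattices and their relative filters\<close>

locale meet_slat =
  fixes A :: "('a, 'b) halg_scheme"
  assumes meet_semilattice: "meet_semilattice A"
begin

lemma mt_closed [simp]: "x \<in> car A \<Longrightarrow> y \<in> car A \<Longrightarrow> mt A x y \<in> car A"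
  using meet_semilattice unfolding meet_semilattice_def by blast

lemma mt_assoc: "x \<in> car A \<Longrightarrow> y \<in> car A \<Longrightarrow> z \<in> car A \<Longrightarrow> mt A (mt A x y) z = mt A x (mt A y z)"
  using meet_semilattice unfolding meet_semilattice_def by blast

lemma mt_comm: "x \<in> car A \<Longrightarrow> y \<in> car A \<Longrightarrow> mt A x y = mt A y x"
  using meet_semilattice unfolding meet_semilattice_def by blast

lemma mt_idem [simp]: "x \<in> car A \<Longrightarrow> mt A x x = x"
  using meet_semilattice unfolding meet_semilattice_def by blast

lemma hle_refl [simp]: "x \<in> car A \<Longrightarrow> hle A x x"
  by (simp add: hle_def)

lemma hle_antisym: "x \<in> car A \<Longrightarrow> y \<in> car A \<Longrightarrow> hle A x y \<Longrightarrow> hle A y x \<Longrightarrow> x = y"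
  unfolding hle_def using mt_comm by force

lemma hle_trans: "x \<in> car A \<Longrightarrow> y \<in> car A \<Longrightarrow> z \<in> car A \<Longrightarrow> hle A x y \<Longrightarrow> hle A y z \<Longrightarrow> hle A x z"
  unfolding hle_def using mt_assoc[of x y z] by simp

lemma mt_le1 [simp]: "x \<in> car A \<Longrightarrow> y \<in> car A \<Longrightarrow> hle A (mt A x y) x"
  unfolding hle_def using mt_assoc[of x y x] mt_comm[of y x] mt_assoc[of x x y] by simp

lemma mt_le2 [simp]: "x \<in> car A \<Longrightarrow> y \<in> car A \<Longrightarrow> hle A (mt A x y) y"
  unfolding hle_def using mt_assoc[of x y y] by simp

lemma hle_mtI: "x \<in> car A \<Longrightarrow> y \<in> car A \<Longrightarrow> z \<in> car A \<Longrightarrow> hle A z x \<Longrightarrow> hle A z y \<Longrightarrow> hle A z (mt A x y)"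
  unfolding hle_def using mt_assoc[of z x y] by simp

lemma mt_mono:
  "x \<in> car A \<Longrightarrow> y \<in> car A \<Longrightarrow> z \<in> car A \<Longrightarrow> w \<in> car A \<Longrightarrow> hle A x y \<Longrightarrow> hle A z w \<Longrightarrow>
   hle A (mt A x z) (mt A y w)"
  using hle_trans[of "mt A x z" x y] hle_trans[of "mt A x z" z w] hle_mtI[of y w "mt A x z"] by auto

end

lemma finite_closed_ex_least:
  assumes "finite T" and "T \<noteq> {}"
    and closed: "\<And>a b. a \<in> T \<Longrightarrow> b \<in> T \<Longrightarrow> f a b \<in> T \<and> R (f a b) a \<and> R (f a b) b"
    and transitive: "\<And>x y z. x \<in> T \<Longrightarrow> y \<in> T \<Longrightarrow> z \<in> T \<Longrightarrow> R x y \<Longrightarrow> R y z \<Longrightarrow> R x z"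
    and reflexive: "\<And>x. x \<in> T \<Longrightarrow> R x x"
  shows "\<exists>m\<in>T. \<forall>z\<in>T. R m z"
proof -
  have "\<exists>m\<in>T. \<forall>z\<in>T'. R m z" if "finite T'" "T' \<noteq> {}" "T' \<subseteq> T" for T'
    using that
  proof (induction T' rule: finite_ne_induct)
    case (singleton x)
    then show ?case using reflexive by blast
  next
    case (insert x F)
    then obtain m where "m \<in> T" "\<forall>z\<in>F. R m z" by blast
    with insert.prems closed[of x m] transitive show ?case by blast
  qed
  then show ?thesis using assms(1,2) by blast
qed

locale meet_subslat = meet_slat A for A :: "('a, 'b) halg_scheme" +
  fixes S :: "'a set"
  assumes top_max: "top_max A"
    and S_subset: "S \<subseteq> car A" and tp_in_S: "tp A \<in> S"
    and mt_in_S: "x \<in> S \<Longrightarrow> y \<in> S \<Longrightarrow> mt A x y \<in> S"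
begin

lemma in_car [intro]: "x \<in> S \<Longrightarrow> x \<in> car A"
  using S_subset by blast

lemma hle_tp: "x \<in> car A \<Longrightarrow> hle A x (tp A)"
  using top_max unfolding top_max_def by blast

lemma hle_trans_S: "x \<in> S \<Longrightarrow> y \<in> S \<Longrightarrow> z \<in> S \<Longrightarrow> hle A x y \<Longrightarrow> hle A y z \<Longrightarrow> hle A x z"
  using hle_trans in_car by blast

definition S_filter :: "'a set \<Rightarrow> bool" where
  "S_filter Q \<longleftrightarrow> Q \<subseteq> S \<and> tp A \<in> Q \<and> (\<forall>x\<in>Q. \<forall>y\<in>Q. mt A x y \<in> Q)
     \<and> (\<forall>x\<in>Q. \<forall>y\<in>S. hle A x y \<longrightarrow> y \<in> Q)"

definition maximal_omitting :: "'a \<Rightarrow> 'a set \<Rightarrow> bool" where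
  "maximal_omitting a Q \<longleftrightarrow>
     S_filter Q \<and> a \<notin> Q \<and> (\<forall>Q'. S_filter Q' \<longrightarrow> Q \<subseteq> Q' \<longrightarrow> a \<notin> Q' \<longrightarrow> Q' = Q)"

definition max_omitting_filters :: "'a set set" where
  "max_omitting_filters = {Q. \<exists>a\<in>S. maximal_omitting a Q}"

definition filter_extend :: "'a set \<Rightarrow> 'a \<Rightarrow> 'a set" where
  "filter_extend Q b = {z \<in> S. \<exists>q\<in>Q. hle A (mt A q b) z}"

lemma filter_subset: "S_filter Q \<Longrightarrow> x \<in> Q \<Longrightarrow> x \<in> S"
  unfolding S_filter_def by blast

lemma filter_tp: "S_filter Q \<Longrightarrow> tp A \<in> Q"
  unfolding S_filter_def by blast

lemma filter_mt: "S_filter Q \<Longrightarrow> x \<in> Q \<Longrightarrow> y \<in> Q \<Longrightarrow> mt A x y \<in> Q"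
  unfolding S_filter_def by blast

lemma filter_up: "S_filter Q \<Longrightarrow> x \<in> Q \<Longrightarrow> y \<in> S \<Longrightarrow> hle A x y \<Longrightarrow> y \<in> Q"
  unfolding S_filter_def by blast

lemma filter_mt_iff:
  assumes Q: "S_filter Q" and x: "x \<in> S" and y: "y \<in> S"
  shows "mt A x y \<in> Q \<longleftrightarrow> x \<in> Q \<and> y \<in> Q"
proof -
  have "hle A (mt A x y) x" "hle A (mt A x y) y" using in_car x y by simp_all
  then show ?thesis using filter_up[OF Q _ x] filter_up[OF Q _ y] filter_mt[OF Q] by blast
qed

lemma maximal_omitting_filter: "maximal_omitting a Q \<Longrightarrow> S_filter Q"
  and maximal_omitting_notin: "maximal_omitting a Q \<Longrightarrow> a \<notin> Q"
  unfolding maximal_omitting_def by blast+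

lemma max_omitting_filters_filter: "Q \<in> max_omitting_filters \<Longrightarrow> S_filter Q"
  unfolding max_omitting_filters_def maximal_omitting_def by blast

lemma maximal_omitting_strict:
  "maximal_omitting a Q \<Longrightarrow> S_filter Q' \<Longrightarrow> Q \<subset> Q' \<Longrightarrow> a \<in> Q'"
  unfolding maximal_omitting_def by blast

lemma maximal_omitting_mono:
  assumes Q: "maximal_omitting a Q" and b: "b \<in> S" "b \<notin> Q" and a: "a \<in> car A" "hle A a b"
  shows "maximal_omitting b Q"
  unfolding maximal_omitting_def
proof (intro conjI allI impI)
  fix Q' assume Q': "S_filter Q'" "Q \<subseteq> Q'" "b \<notin> Q'"
  then have "a \<notin> Q'" using filter_up[OF Q'(1) _ b(1) a(2)] by blast
  then show "Q' = Q" using Q Q' unfolding maximal_omitting_def by blast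
qed (use Q b maximal_omitting_filter in auto)

lemma maximal_omitting_mt:
  assumes Q: "maximal_omitting (mt A x y) Q" and x: "x \<in> S" and y: "y \<in> S"
  shows "maximal_omitting x Q \<or> maximal_omitting y Q"
proof -
  have "x \<notin> Q \<or> y \<notin> Q"
    using filter_mt[OF maximal_omitting_filter[OF Q]] maximal_omitting_notin[OF Q] by blast
  then show ?thesis
    using maximal_omitting_mono[OF Q x] maximal_omitting_mono[OF Q y] in_car[OF x] in_car[OF y] by auto
qed

lemma S_filter_principal: "x \<in> S \<Longrightarrow> S_filter {z \<in> S. hle A x z}"
  unfolding S_filter_def
  using tp_in_S hle_tp mt_in_S hle_mtI hle_trans[of x _ _] by blast

lemma S_filter_extend:
  assumes Q: "S_filter Q" and b: "b \<in> S"
  shows "S_filter (filter_extend Q b)"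
  unfolding S_filter_def filter_extend_def
proof (intro conjI ballI impI)
  show "tp A \<in> {z \<in> S. \<exists>q\<in>Q. hle A (mt A q b) z}"
    using Q b in_car[OF b] tp_in_S in_car[OF tp_in_S] filter_tp[OF Q] hle_tp[of "mt A (tp A) b"]
    by (auto intro!: bexI[of _ "tp A"])
next
  fix x y assume "x \<in> {z \<in> S. \<exists>q\<in>Q. hle A (mt A q b) z}" "y \<in> {z \<in> S. \<exists>q\<in>Q. hle A (mt A q b) z}"
  then obtain q1 q2 where q: "q1 \<in> Q" "q2 \<in> Q" "hle A (mt A q1 b) x" "hle A (mt A q2 b) y"
    and xy: "x \<in> S" "y \<in> S" by blast
  have c: "q1 \<in> car A" "q2 \<in> car A" "b \<in> car A" "x \<in> car A" "y \<in> car A"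
    using q xy b Q filter_subset by auto
  have m: "mt A q1 q2 \<in> car A" using c by simp
  have mb: "mt A (mt A q1 q2) b \<in> car A" using m c by simp
  have "hle A (mt A (mt A q1 q2) b) x"
    using hle_trans[OF mb _ c(4) mt_mono[OF m c(1) c(3) c(3) mt_le1[OF c(1,2)] hle_refl[OF c(3)]] q(3)] c
    by simp
  moreover have "hle A (mt A (mt A q1 q2) b) y"
    using hle_trans[OF mb _ c(5) mt_mono[OF m c(2) c(3) c(3) mt_le2[OF c(1,2)] hle_refl[OF c(3)]] q(4)] c
    by simp
  ultimately have "hle A (mt A (mt A q1 q2) b) (mt A x y)"
    using hle_mtI[OF c(4,5) mb] by blast
  then show "mt A x y \<in> {z \<in> S. \<exists>q\<in>Q. hle A (mt A q b) z}"
    using q xy Q mt_in_S filter_mt by blast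
next
  fix x y assume x: "x \<in> {z \<in> S. \<exists>q\<in>Q. hle A (mt A q b) z}" and y: "y \<in> S" "hle A x y"
  then obtain q where q: "q \<in> Q" "hle A (mt A q b) x" "x \<in> S" by blast
  have "mt A q b \<in> car A" using in_car[OF filter_subset[OF Q q(1)]] in_car[OF b] by simp
  then have "hle A (mt A q b) y" using hle_trans[OF _ _ _ q(2) y(2)] q(3) y(1) by blast
  then show "y \<in> {z \<in> S. \<exists>q\<in>Q. hle A (mt A q b) z}" using q(1) y(1) by blast
next
  show "{z \<in> S. \<exists>q\<in>Q. hle A (mt A q b) z} \<subseteq> S" by blast
qed

lemma subset_filter_extend: "S_filter Q \<Longrightarrow> b \<in> S \<Longrightarrow> Q \<subseteq> filter_extend Q b"
  unfolding filter_extend_def using filter_subset by (fastforce intro: mt_le1)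

lemma in_filter_extend: "S_filter Q \<Longrightarrow> b \<in> S \<Longrightarrow> b \<in> filter_extend Q b"
  unfolding filter_extend_def using filter_tp tp_in_S by (fastforce intro: mt_le2)

lemma ex_maximal_omitting:
  assumes F: "S_filter F" and a: "a \<notin> F"
  shows "\<exists>Q. maximal_omitting a Q \<and> F \<subseteq> Q"
proof -
  let ?\<FF> = "{Q. S_filter Q \<and> F \<subseteq> Q \<and> a \<notin> Q}"
  have "\<exists>U\<in>?\<FF>. \<forall>X\<in>\<CC>. X \<subseteq> U" if "\<CC> \<in> chains ?\<FF>" for \<CC>
  proof (cases "\<CC> = {}")
    case True
    then show ?thesis using F a by blast
  next
    case False
    have sub: "\<CC> \<subseteq> ?\<FF>" and chain: "\<And>X Y. X \<in> \<CC> \<Longrightarrow> Y \<in> \<CC> \<Longrightarrow> X \<subseteq> Y \<or> Y \<subseteq> X"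
      using that unfolding chains_def chain_subset_def by blast+
    have "mt A x y \<in> \<Union>\<CC>" if xy: "x \<in> \<Union>\<CC>" "y \<in> \<Union>\<CC>" for x y
    proof -
      obtain X Y where "X \<in> \<CC>" "Y \<in> \<CC>" "x \<in> X" "y \<in> Y" using xy by blast
      then show ?thesis using chain[of X Y] sub filter_mt by blast
    qed
    moreover have "\<Union>\<CC> \<subseteq> S" "tp A \<in> \<Union>\<CC>"
      using False sub filter_subset filter_tp by blast+
    moreover have "y \<in> \<Union>\<CC>" if "x \<in> \<Union>\<CC>" "y \<in> S" "hle A x y" for x y
      using that sub filter_up by blast
    ultimately have "S_filter (\<Union>\<CC>)"
      unfolding S_filter_def by blast
    then show ?thesis using False sub by blast
  qed
  from Zorn_Lemma2[rule_format, OF this] obtain Q where "Q \<in> ?\<FF>" "\<forall>X\<in>?\<FF>. Q \<subseteq> X \<longrightarrow> X = Q"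
    by blast
  then show ?thesis unfolding maximal_omitting_def by blast
qed

lemma maximal_omitting_extend:
  assumes Q: "maximal_omitting a Q" and b: "b \<in> S" "b \<notin> Q"
  shows "a \<in> S" and "\<exists>q\<in>Q. hle A (mt A q b) a"
proof -
  have fQ: "S_filter Q" using Q by (rule maximal_omitting_filter)
  have "Q \<subset> filter_extend Q b"
    using subset_filter_extend[OF fQ b(1)] in_filter_extend[OF fQ b(1)] b(2) by blast
  then have "a \<in> filter_extend Q b"
    by (rule maximal_omitting_strict[OF Q S_filter_extend[OF fQ b(1)]])
  then show "a \<in> S" "\<exists>q\<in>Q. hle A (mt A q b) a" unfolding filter_extend_def by blast+
qed

lemma ex_maximal_omitting_extend:
  assumes P: "S_filter P" and x: "x \<in> S" and no: "\<And>q. q \<in> P \<Longrightarrow> \<not> hle A (mt A q x) y"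
  shows "\<exists>Q. maximal_omitting y Q \<and> P \<subseteq> Q \<and> x \<in> Q"
proof -
  have "y \<notin> filter_extend P x" using no unfolding filter_extend_def by blast
  from ex_maximal_omitting[OF S_filter_extend[OF P x] this] show ?thesis
    using subset_filter_extend[OF P x] in_filter_extend[OF P x] by blast
qed

lemma max_omitting_filters_separate:
  assumes x: "x \<in> S" and y: "y \<in> S" and "\<not> hle A x y"
  shows "\<exists>Q\<in>max_omitting_filters. x \<in> Q \<and> y \<notin> Q"
proof -
  have "y \<notin> {z \<in> S. hle A x z}" using assms by blast
  from ex_maximal_omitting[OF S_filter_principal[OF x] this] obtain Q
    where Q: "maximal_omitting y Q" "{z \<in> S. hle A x z} \<subseteq> Q" by blast
  have "Q \<in> max_omitting_filters" using Q(1) y unfolding max_omitting_filters_def by blast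
  moreover have "x \<in> Q" using Q(2) x in_car[OF x] by auto
  ultimately show ?thesis using maximal_omitting_notin[OF Q(1)] by blast
qed

lemma finite_if_finite_max_omitting_filters:
  assumes "finite max_omitting_filters"
  shows "finite S"
proof -
  have "inj_on (\<lambda>x. {Q \<in> max_omitting_filters. x \<in> Q}) S"
  proof (rule inj_onI)
    fix x y assume x: "x \<in> S" and y: "y \<in> S"
      and eq: "{Q \<in> max_omitting_filters. x \<in> Q} = {Q \<in> max_omitting_filters. y \<in> Q}"
    have "hle A x y" using max_omitting_filters_separate[OF x y] eq by blast
    moreover have "hle A y x" using max_omitting_filters_separate[OF y x] eq by blast
    ultimately show "x = y" using hle_antisym x y by blast
  qed
  moreover have "(\<lambda>x. {Q \<in> max_omitting_filters. x \<in> Q}) ` S \<subseteq> Pow max_omitting_filters"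
    by blast
  ultimately show ?thesis using assms by (meson finite_Pow_iff inj_on_finite)
qed

end

section \<open>Finite subsemilattices as Heyting algebras\<close>

context meet_subslat
begin

definition S_join :: "'a \<Rightarrow> 'a \<Rightarrow> 'a" where
  "S_join x y = (SOME z. z \<in> S \<and> hle A x z \<and> hle A y z \<and> (\<forall>w\<in>S. hle A x w \<longrightarrow> hle A y w \<longrightarrow> hle A z w))"

definition S_bot :: "'a" where
  "S_bot = (SOME z. z \<in> S \<and> (\<forall>w\<in>S. hle A z w))"

definition S_imp :: "'a \<Rightarrow> 'a \<Rightarrow> 'a" where
  "S_imp x y = (SOME z. z \<in> S \<and> (\<forall>c\<in>S. hle A (mt A c x) y \<longleftrightarrow> hle A c z))"

definition S_HA :: "'a halg" where
  "S_HA = \<lparr>car = S, mt = mt A, jn = S_join, im = S_imp, ng = (\<lambda>x. S_imp x S_bot), bt = S_bot, tp = tp A\<rparr>"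

definition S_residuated :: bool where
  "S_residuated \<longleftrightarrow> (\<forall>x\<in>S. \<forall>y\<in>S. \<exists>z\<in>S. \<forall>c\<in>S. hle A (mt A c x) y \<longleftrightarrow> hle A c z)"

lemma S_HA_simps [simp]:
  "car S_HA = S" "mt S_HA = mt A" "jn S_HA = S_join" "im S_HA = S_imp" "bt S_HA = S_bot" "tp S_HA = tp A"
  by (simp_all add: S_HA_def)

lemma hle_S_HA [simp]: "hle S_HA = hle A"
  by (simp add: hle_def [abs_def])

lemma S_imp_spec:
  assumes "S_residuated" and "x \<in> S" and "y \<in> S"
  shows "S_imp x y \<in> S \<and> (\<forall>c\<in>S. hle A (mt A c x) y \<longleftrightarrow> hle A c (S_imp x y))"
  unfolding S_imp_def by (rule someI_ex) (use assms in \<open>unfold S_residuated_def, blast\<close>)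

lemma S_imp_eqI:
  assumes "S_residuated" and x: "x \<in> S" and y: "y \<in> S" and z: "z \<in> S"
    and res: "\<And>c. c \<in> S \<Longrightarrow> hle A (mt A c x) y \<longleftrightarrow> hle A c z"
  shows "S_imp x y = z"
proof -
  note i = S_imp_spec[OF assms(1) x y]
  have "hle A z (S_imp x y)" using i res[OF z] hle_refl[OF in_car[OF z]] z by blast
  moreover have "hle A (S_imp x y) z"
    using i res[of "S_imp x y"] hle_refl[OF in_car[of "S_imp x y"]] by blast
  ultimately show ?thesis using hle_antisym i z by blast
qed

context
  assumes fin: "finite S"
begin

lemma S_join_spec:
  assumes x: "x \<in> S" and y: "y \<in> S"
  shows "S_join x y \<in> S \<and> hle A x (S_join x y) \<and> hle A y (S_join x y)
    \<and> (\<forall>w\<in>S. hle A x w \<longrightarrow> hle A y w \<longrightarrow> hle A (S_join x y) w)"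
proof -
  let ?U = "{z \<in> S. hle A x z \<and> hle A y z}"
  have "\<exists>m\<in>?U. \<forall>z\<in>?U. hle A m z"
  proof (rule finite_closed_ex_least[where f = "mt A"])
    show "finite ?U" using fin by simp
    show "?U \<noteq> {}" using x y tp_in_S hle_tp in_car by blast
    show "mt A a b \<in> ?U \<and> hle A (mt A a b) a \<and> hle A (mt A a b) b" if "a \<in> ?U" "b \<in> ?U" for a b
      using that mt_in_S hle_mtI in_car x y by auto
    show "hle A u w" if "u \<in> ?U" "v \<in> ?U" "w \<in> ?U" "hle A u v" "hle A v w" for u v w
      using hle_trans_S that by blast
    show "hle A u u" if "u \<in> ?U" for u
      using that in_car by simp
  qed
  then have "\<exists>z. z \<in> S \<and> hle A x z \<and> hle A y z \<and> (\<forall>w\<in>S. hle A x w \<longrightarrow> hle A y w \<longrightarrow> hle A z w)"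
    by blast
  then show ?thesis unfolding S_join_def by (rule someI_ex)
qed

lemma S_join_eqI:
  assumes "x \<in> S" "y \<in> S" "z \<in> S" "hle A x z" "hle A y z"
    and "\<And>w. w \<in> S \<Longrightarrow> hle A x w \<Longrightarrow> hle A y w \<Longrightarrow> hle A z w"
  shows "S_join x y = z"
  using S_join_spec[OF assms(1,2)] assms hle_antisym in_car by meson

lemma S_bot_spec: "S_bot \<in> S \<and> (\<forall>w\<in>S. hle A S_bot w)"
proof -
  have "\<exists>m\<in>S. \<forall>z\<in>S. hle A m z"
  proof (rule finite_closed_ex_least[where f = "mt A"])
    show "mt A a b \<in> S \<and> hle A (mt A a b) a \<and> hle A (mt A a b) b" if "a \<in> S" "b \<in> S" for a b
      using that mt_in_S in_car by simp
    show "hle A u w" if "u \<in> S" "v \<in> S" "w \<in> S" "hle A u v" "hle A v w" for u v w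
      using hle_trans_S that by blast
  qed (use fin tp_in_S in_car in auto)
  then have "\<exists>z. z \<in> S \<and> (\<forall>w\<in>S. hle A z w)" by blast
  then show ?thesis unfolding S_bot_def by (rule someI_ex)
qed

lemma S_bot_eqI: "b \<in> S \<Longrightarrow> (\<And>w. w \<in> S \<Longrightarrow> hle A b w) \<Longrightarrow> S_bot = b"
  using S_bot_spec hle_antisym in_car by blast

lemma S_join_closed: "x \<in> S \<Longrightarrow> y \<in> S \<Longrightarrow> S_join x y \<in> S"
  and S_join_upper1: "x \<in> S \<Longrightarrow> y \<in> S \<Longrightarrow> hle A x (S_join x y)"
  and S_join_upper2: "x \<in> S \<Longrightarrow> y \<in> S \<Longrightarrow> hle A y (S_join x y)"
  using S_join_spec by blast+

lemma S_join_least: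
  "x \<in> S \<Longrightarrow> y \<in> S \<Longrightarrow> w \<in> S \<Longrightarrow> hle A x w \<Longrightarrow> hle A y w \<Longrightarrow> hle A (S_join x y) w"
  using S_join_spec by blast

lemma S_join_assoc:
  assumes x: "x \<in> S" and y: "y \<in> S" and z: "z \<in> S"
  shows "S_join (S_join x y) z = S_join x (S_join y z)"
proof (rule S_join_eqI[OF S_join_closed[OF x y] z])
  have yz: "S_join y z \<in> S" using S_join_closed[OF y z] .
  have xyz: "S_join x (S_join y z) \<in> S" using S_join_closed[OF x yz] .
  then show "S_join x (S_join y z) \<in> S" .
  have "hle A y (S_join x (S_join y z))"
    using hle_trans_S[OF y yz xyz S_join_upper1[OF y z] S_join_upper2[OF x yz]] .
  then show "hle A (S_join x y) (S_join x (S_join y z))"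
    using S_join_least[OF x y xyz] S_join_upper1[OF x yz] by blast
  show "hle A z (S_join x (S_join y z))"
    using hle_trans_S[OF z yz xyz S_join_upper2[OF y z] S_join_upper2[OF x yz]] .
  show "hle A (S_join x (S_join y z)) w" if w: "w \<in> S" "hle A (S_join x y) w" "hle A z w" for w
  proof -
    have "hle A x w" "hle A y w"
      using hle_trans_S[OF _ S_join_closed[OF x y] w(1) _ w(2)]
        S_join_upper1[OF x y] S_join_upper2[OF x y]
        x y by blast+
    then show ?thesis using S_join_least[OF x yz w(1)] S_join_least[OF y z w(1)] w(3) by blast
  qed
qed

lemma is_lattice_S_HA: "is_lattice S_HA"
proof -
  have comm: "S_join x y = S_join y x" if "x \<in> S" "y \<in> S" for x y
    using that S_join_closed S_join_upper1 S_join_upper2 S_join_least by (intro S_join_eqI) auto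
  have idem: "S_join x x = x" if "x \<in> S" for x
    using that in_car by (intro S_join_eqI) auto
  have absorb_mt: "mt A x (S_join x y) = x" if "x \<in> S" "y \<in> S" for x y
    using S_join_upper1[OF that] unfolding hle_def .
  have absorb_jn: "S_join x (mt A x y) = x" if "x \<in> S" "y \<in> S" for x y
    using that mt_in_S in_car by (intro S_join_eqI) auto
  have "meet_semilattice S_HA"
    unfolding meet_semilattice_def using mt_in_S mt_assoc mt_comm in_car by simp
  then show ?thesis
    unfolding is_lattice_def using S_join_closed S_join_assoc comm idem absorb_mt absorb_jn by simp
qed

lemma in_var_HA_S_HA: "S_residuated \<Longrightarrow> in_var HA S_HA"
  using is_lattice_S_HA S_imp_spec S_bot_spec tp_in_S hle_tp in_car
  by (auto simp: top_max_def residuated_def bot_min_def)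

end

end

section \<open>Local finiteness of implicative semilattices\<close>

lemma finite_if_determined_by_upper_sets:
  fixes rank :: "'x \<Rightarrow> nat"
  assumes sig: "finite (sig ` X)"
    and bound: "\<And>x. x \<in> X \<Longrightarrow> rank x \<le> n"
    and rank_less: "\<And>x y. x \<in> X \<Longrightarrow> y \<in> X \<Longrightarrow> R x y \<Longrightarrow> rank x < rank y"
    and determined: "\<And>x y. x \<in> X \<Longrightarrow> y \<in> X \<Longrightarrow> sig x = sig y \<Longrightarrow>
                       {z \<in> X. R x z} = {z \<in> X. R y z} \<Longrightarrow> x = y"
  shows "finite X"
proof -
  have "finite {x \<in> X. k \<le> rank x}" if "k \<le> Suc n" for k
    using that
  proof (induction k rule: inc_induct)
    case base
    have "{x \<in> X. Suc n \<le> rank x} = {}" using bound by fastforce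
    then show ?case by (metis finite.emptyI)
  next
    case (step k)
    let ?upper = "{x \<in> X. Suc k \<le> rank x}"
    let ?f = "\<lambda>x. (sig x, {z \<in> X. R x z})"
    have "inj_on ?f {x \<in> X. rank x = k}"
      by (rule inj_onI) (use determined in auto)
    moreover have "?f ` {x \<in> X. rank x = k} \<subseteq> sig ` X \<times> Pow ?upper"
      using rank_less by fastforce
    ultimately have "finite {x \<in> X. rank x = k}"
      using sig step.IH by (meson finite_Pow_iff finite_SigmaI inj_on_finite)
    moreover have "{x \<in> X. k \<le> rank x} = ?upper \<union> {x \<in> X. rank x = k}" by auto
    ultimately show ?case using step.IH by simp
  qed
  from this[of 0] show ?thesis by simp
qed

inductive_set isl_generated :: "('a, 'b) halg_scheme \<Rightarrow> 'a set \<Rightarrow> 'a set" for A G where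
  gen: "g \<in> G \<Longrightarrow> g \<in> isl_generated A G"
| top: "tp A \<in> isl_generated A G"
| meet: "x \<in> isl_generated A G \<Longrightarrow> y \<in> isl_generated A G \<Longrightarrow> mt A x y \<in> isl_generated A G"
| imp: "x \<in> isl_generated A G \<Longrightarrow> y \<in> isl_generated A G \<Longrightarrow> im A x y \<in> isl_generated A G"

locale impl_slat = meet_slat A for A :: "('a, 'b) halg_scheme" +
  assumes top_max: "top_max A" and residuated: "residuated A"
begin

lemma tp_car [simp]: "tp A \<in> car A"
  using top_max unfolding top_max_def by blast

lemma im_closed [simp]: "x \<in> car A \<Longrightarrow> y \<in> car A \<Longrightarrow> im A x y \<in> car A"
  using residuated unfolding residuated_def by blast

lemma residuation:
  "a \<in> car A \<Longrightarrow> b \<in> car A \<Longrightarrow> c \<in> car A \<Longrightarrow> hle A (mt A c a) b \<longleftrightarrow> hle A c (im A a b)"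
  using residuated unfolding residuated_def by blast

lemma modus_ponens: "a \<in> car A \<Longrightarrow> b \<in> car A \<Longrightarrow> hle A (mt A a (im A a b)) b"
  by (metis im_closed hle_refl mt_comm residuation)

lemma hle_im: "a \<in> car A \<Longrightarrow> b \<in> car A \<Longrightarrow> hle A b (im A a b)"
  by (metis mt_le1 residuation)


lemma ex_lower_bound:
  assumes "finite F" "F \<subseteq> car A"
  shows "\<exists>m\<in>car A. \<forall>x\<in>F. hle A m x"
  using assms
proof (induction F rule: finite_induct)
  case empty
  then show ?case using tp_car by blast
next
  case (insert x F)
  then obtain m where m: "m \<in> car A" "\<forall>y\<in>F. hle A m y" by blast
  have x: "x \<in> car A" using insert.prems by blast
  have "hle A (mt A x m) y" if "y \<in> F" for y
  proof -
    have "y \<in> car A" using that insert.prems by blast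
    then show ?thesis
      using hle_trans[OF mt_closed[OF x m(1)] m(1) _ mt_le2[OF x m(1)]] m(2) that by blast
  qed
  then show ?case using x m(1) by (intro bexI[of _ "mt A x m"]) auto
qed
end

locale impl_slat_fin_gen = impl_slat A for A :: "('a, 'b) halg_scheme" +
  fixes G :: "'a set"
  assumes G_subset: "G \<subseteq> car A" and finite_G: "finite G"
begin

abbreviation span :: "'a set" where
  "span \<equiv> isl_generated A G"

lemma span_car: "x \<in> span \<Longrightarrow> x \<in> car A"
  by (induction rule: isl_generated.induct) (use G_subset in auto)

sublocale meet_subslat A span
  by unfold_locales (auto simp: top_max span_car intro: isl_generated.intros)

lemma maximal_omitting_im:
  assumes Q: "maximal_omitting (im A x y) Q" and x: "x \<in> span" and y: "y \<in> span"
  shows "maximal_omitting y Q"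
proof -
  have fQ: "S_filter Q" and notin: "im A x y \<notin> Q"
    using Q maximal_omitting_filter maximal_omitting_notin by blast+
  have c: "x \<in> car A" "y \<in> car A" using x y span_car by blast+
  have xy: "im A x y \<in> span" using x y by (rule isl_generated.imp)
  have "x \<in> Q"
  proof (rule ccontr)
    assume "x \<notin> Q"
    then obtain q where q: "q \<in> Q" "hle A (mt A q x) (im A x y)"
      using maximal_omitting_extend(2)[OF Q x] by blast
    have qc: "q \<in> car A" using q(1) fQ filter_subset span_car by blast
    have "hle A (mt A (mt A q x) x) y" using q(2) residuation c qc by simp
    then have "hle A q (im A x y)" using residuation c qc by (simp add: mt_assoc)
    then show False using filter_up[OF fQ q(1) xy] notin by blast
  qed
  have "y \<notin> Q" using notin filter_up[OF fQ _ xy] hle_im c by blast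
  show ?thesis
    unfolding maximal_omitting_def
  proof (intro conjI allI impI)
    fix Q' assume Q': "S_filter Q'" "Q \<subseteq> Q'" "y \<notin> Q'"
    show "Q' = Q"
    proof (rule ccontr)
      assume "Q' \<noteq> Q"
      then have "im A x y \<in> Q'" using maximal_omitting_strict[OF Q Q'(1)] Q'(2) by blast
      then have "mt A x (im A x y) \<in> Q'" using filter_mt[OF Q'(1)] \<open>x \<in> Q\<close> Q'(2) by blast
      then show False using filter_up[OF Q'(1) _ y] modus_ponens c Q'(3) by blast
    qed
  qed (use fQ \<open>y \<notin> Q\<close> in auto)
qed

lemma maximal_omitting_generator:
  "a \<in> span \<Longrightarrow> maximal_omitting a Q \<Longrightarrow> \<exists>g\<in>G. maximal_omitting g Q"
proof (induction arbitrary: Q rule: isl_generated.induct)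
  case (gen g)
  then show ?case by blast
next
  case top
  then show ?case using filter_tp maximal_omitting_filter maximal_omitting_notin by blast
next
  case (meet x y)
  then show ?case using maximal_omitting_mt by blast
next
  case (imp x y)
  then show ?case using maximal_omitting_im by blast
qed

lemma max_omitting_filters_generator:
  "P \<in> max_omitting_filters \<Longrightarrow> \<exists>g\<in>G. maximal_omitting g P"
  unfolding max_omitting_filters_def using maximal_omitting_generator by blast

(* Implication is evaluated as in a Kripke model on max_omitting_filters. *)
lemma im_mem_iff:
  assumes P: "S_filter P" and x: "x \<in> span" and y: "y \<in> span"
  shows "im A x y \<in> P \<longleftrightarrow> (\<forall>Q\<in>max_omitting_filters. P \<subseteq> Q \<longrightarrow> x \<in> Q \<longrightarrow> y \<in> Q)"
proof
  assume xy: "im A x y \<in> P"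
  show "\<forall>Q\<in>max_omitting_filters. P \<subseteq> Q \<longrightarrow> x \<in> Q \<longrightarrow> y \<in> Q"
  proof (intro ballI impI)
    fix Q assume "Q \<in> max_omitting_filters" "P \<subseteq> Q" "x \<in> Q"
    moreover from this have Q: "S_filter Q" by (simp add: max_omitting_filters_filter)
    ultimately have "mt A x (im A x y) \<in> Q" using xy filter_mt by blast
    then show "y \<in> Q" using filter_up[OF Q _ y] modus_ponens x y span_car by blast
  qed
next
  assume H: "\<forall>Q\<in>max_omitting_filters. P \<subseteq> Q \<longrightarrow> x \<in> Q \<longrightarrow> y \<in> Q"
  show "im A x y \<in> P"
  proof (rule ccontr)
    assume "im A x y \<notin> P"
    have "\<not> hle A (mt A q x) y" if "q \<in> P" for q
    proof
      assume "hle A (mt A q x) y"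
      then have "hle A q (im A x y)"
        using residuation x y span_car filter_subset[OF P that] by blast
      then show False
        using filter_up[OF P that isl_generated.imp[OF x y]] \<open>im A x y \<notin> P\<close> by blast
    qed
    then obtain Q where "maximal_omitting y Q" "P \<subseteq> Q" "x \<in> Q"
      using ex_maximal_omitting_extend[OF P x] by blast
    then show False using H y maximal_omitting_notin unfolding max_omitting_filters_def by blast
  qed
qed

lemma max_omitting_filter_determined:
  assumes P: "P \<in> max_omitting_filters" and P': "P' \<in> max_omitting_filters"
    and trace: "P \<inter> G = P' \<inter> G"
    and upper: "{Q \<in> max_omitting_filters. P \<subset> Q} = {Q \<in> max_omitting_filters. P' \<subset> Q}"
  shows "P = P'"
proof -
  have fP: "S_filter P" and fP': "S_filter P'" using P P' max_omitting_filters_filter by auto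
  have "x \<in> P \<longleftrightarrow> x \<in> P'" if "x \<in> span" for x
    using that
  proof (induction rule: isl_generated.induct)
    case (gen g)
    then show ?case using trace by blast
  next
    case top
    then show ?case using fP fP' filter_tp by blast
  next
    case (meet x y)
    then show ?case using filter_mt_iff[OF fP meet.hyps] filter_mt_iff[OF fP' meet.hyps] by blast
  next
    case (imp x y)
    have "im A x y \<in> P \<longleftrightarrow> (\<forall>Q\<in>max_omitting_filters. P \<subseteq> Q \<longrightarrow> x \<in> Q \<longrightarrow> y \<in> Q)"
      by (rule im_mem_iff[OF fP imp.hyps])
    also have "\<dots> \<longleftrightarrow> (x \<in> P \<longrightarrow> y \<in> P) \<and> (\<forall>Q\<in>{Q \<in> max_omitting_filters. P \<subset> Q}. x \<in> Q \<longrightarrow> y \<in> Q)"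
      using P by blast
    also have "\<dots> \<longleftrightarrow> (x \<in> P' \<longrightarrow> y \<in> P') \<and> (\<forall>Q\<in>{Q \<in> max_omitting_filters. P' \<subset> Q}. x \<in> Q \<longrightarrow> y \<in> Q)"
      using upper imp.IH by simp
    also have "\<dots> \<longleftrightarrow> (\<forall>Q\<in>max_omitting_filters. P' \<subseteq> Q \<longrightarrow> x \<in> Q \<longrightarrow> y \<in> Q)"
      using P' by blast
    also have "\<dots> \<longleftrightarrow> im A x y \<in> P'"
      by (rule im_mem_iff[OF fP' imp.hyps, symmetric])
    finally show ?case .
  qed
  then show ?thesis using fP fP' filter_subset by blast
qed

lemma trace_strict_mono:
  assumes "P \<in> max_omitting_filters" "S_filter Q" "P \<subset> Q"
  shows "P \<inter> G \<subset> Q \<inter> G"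
proof -
  obtain g where "g \<in> G" "maximal_omitting g P"
    using max_omitting_filters_generator[OF assms(1)] by blast
  then show ?thesis
    using maximal_omitting_strict[OF _ assms(2,3)] maximal_omitting_notin assms(3) by blast
qed

lemma finite_max_omitting_filters: "finite max_omitting_filters"
proof (rule finite_if_determined_by_upper_sets)
  show "finite ((\<lambda>P. P \<inter> G) ` max_omitting_filters)"
    by (rule finite_subset[of _ "Pow G"]) (use finite_G in auto)
  show "card (P \<inter> G) \<le> card G" for P
    by (rule card_mono[OF finite_G]) blast
  show "card (P \<inter> G) < card (Q \<inter> G)"
    if "P \<in> max_omitting_filters" "Q \<in> max_omitting_filters" "P \<subset> Q" for P Q
    using trace_strict_mono[OF that(1) max_omitting_filters_filter[OF that(2)] that(3)] finite_G
    by (simp add: psubset_card_mono)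
qed (rule max_omitting_filter_determined)

lemma finite_span: "finite span"
  using finite_if_finite_max_omitting_filters[OF finite_max_omitting_filters] .

lemma residuation_span:
  "x \<in> span \<Longrightarrow> y \<in> span \<Longrightarrow> c \<in> span \<Longrightarrow> hle A (mt A c x) y \<longleftrightarrow> hle A c (im A x y)"
  using residuation span_car by blast

lemma S_residuated_span: S_residuated
  unfolding S_residuated_def
proof (intro ballI)
  fix x y assume xy: "x \<in> span" "y \<in> span"
  show "\<exists>z\<in>span. \<forall>c\<in>span. hle A (mt A c x) y \<longleftrightarrow> hle A c z"
    using residuation_span[OF xy] isl_generated.imp[OF xy] by blast
qed

lemma S_imp_span: "x \<in> span \<Longrightarrow> y \<in> span \<Longrightarrow> S_imp x y = im A x y"
  by (rule S_imp_eqI[OF S_residuated_span _ _ isl_generated.imp]) (simp_all add: residuation_span)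

end

section \<open>Local finiteness of pseudocomplemented distributive lattices\<close>

inductive_set pdl_generated :: "('a, 'b) halg_scheme \<Rightarrow> 'a set \<Rightarrow> 'a set" for A G where
  gen: "g \<in> G \<Longrightarrow> g \<in> pdl_generated A G"
| top: "tp A \<in> pdl_generated A G"
| bot: "bt A \<in> pdl_generated A G"
| meet: "x \<in> pdl_generated A G \<Longrightarrow> y \<in> pdl_generated A G \<Longrightarrow> mt A x y \<in> pdl_generated A G"
| join: "x \<in> pdl_generated A G \<Longrightarrow> y \<in> pdl_generated A G \<Longrightarrow> jn A x y \<in> pdl_generated A G"
| neg: "x \<in> pdl_generated A G \<Longrightarrow> ng A x \<in> pdl_generated A G"

locale distrib_lat = meet_slat A for A :: "('a, 'b) halg_scheme" +
  assumes is_lattice: "is_lattice A" and is_distributive: "is_distributive A"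
begin

lemma jn_closed [simp]: "x \<in> car A \<Longrightarrow> y \<in> car A \<Longrightarrow> jn A x y \<in> car A"
  using is_lattice unfolding is_lattice_def by blast

lemma jn_assoc: "x \<in> car A \<Longrightarrow> y \<in> car A \<Longrightarrow> z \<in> car A \<Longrightarrow> jn A (jn A x y) z = jn A x (jn A y z)"
  using is_lattice unfolding is_lattice_def by blast

lemma jn_comm: "x \<in> car A \<Longrightarrow> y \<in> car A \<Longrightarrow> jn A x y = jn A y x"
  using is_lattice unfolding is_lattice_def by blast

lemma mt_jn_absorb: "x \<in> car A \<Longrightarrow> y \<in> car A \<Longrightarrow> mt A x (jn A x y) = x"
  using is_lattice unfolding is_lattice_def by blast

lemma jn_mt_absorb: "x \<in> car A \<Longrightarrow> y \<in> car A \<Longrightarrow> jn A x (mt A x y) = x"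
  using is_lattice unfolding is_lattice_def by blast

lemma mt_jn_distrib: "x \<in> car A \<Longrightarrow> y \<in> car A \<Longrightarrow> z \<in> car A \<Longrightarrow> mt A x (jn A y z) = jn A (mt A x y) (mt A x z)"
  using is_distributive unfolding is_distributive_def by blast

lemma jn_upper1: "x \<in> car A \<Longrightarrow> y \<in> car A \<Longrightarrow> hle A x (jn A x y)"
  unfolding hle_def by (rule mt_jn_absorb)

lemma jn_upper2: "x \<in> car A \<Longrightarrow> y \<in> car A \<Longrightarrow> hle A y (jn A x y)"
  using jn_upper1[of y x] jn_comm[of x y] by simp

lemma hle_iff_jn: "x \<in> car A \<Longrightarrow> z \<in> car A \<Longrightarrow> hle A x z \<longleftrightarrow> jn A x z = z"
  unfolding hle_def
  using jn_mt_absorb[of z x] mt_comm[of x z] jn_comm[of z x] mt_jn_absorb[of x z] by auto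

lemma jn_least:
  assumes "x \<in> car A" "y \<in> car A" "z \<in> car A" "hle A x z" "hle A y z"
  shows "hle A (jn A x y) z"
proof -
  have "jn A (jn A x y) z = jn A x (jn A y z)" using assms jn_assoc by simp
  also have "\<dots> = z" using assms hle_iff_jn by simp
  finally show ?thesis using assms hle_iff_jn by simp
qed

end

locale pcdl = distrib_lat A for A :: "('a, 'b) halg_scheme" +
  assumes bot_min: "bot_min A" and top_max: "top_max A" and pseudocomplemented: "pseudocomplemented A"
begin

lemma bt_car [simp]: "bt A \<in> car A"
  using bot_min unfolding bot_min_def by blast

lemma tp_car [simp]: "tp A \<in> car A"
  using top_max unfolding top_max_def by blast

lemma bt_hle: "x \<in> car A \<Longrightarrow> hle A (bt A) x"
  using bot_min unfolding bot_min_def by blast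

lemma hle_bt_iff: "x \<in> car A \<Longrightarrow> hle A x (bt A) \<longleftrightarrow> x = bt A"
  using hle_antisym bt_hle by auto

lemma ng_closed [simp]: "x \<in> car A \<Longrightarrow> ng A x \<in> car A"
  using pseudocomplemented unfolding pseudocomplemented_def by blast

lemma pseudocomplement: "a \<in> car A \<Longrightarrow> c \<in> car A \<Longrightarrow> mt A c a = bt A \<longleftrightarrow> hle A c (ng A a)"
  using pseudocomplemented unfolding pseudocomplemented_def by blast

lemma mt_ng: "x \<in> car A \<Longrightarrow> mt A (ng A x) x = bt A"
  using pseudocomplement[of x "ng A x"] by simp

end

locale pcdl_fin_gen = pcdl A for A :: "('a, 'b) halg_scheme" +
  fixes G :: "'a set"
  assumes G_subset: "G \<subseteq> car A" and finite_G: "finite G"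
begin

abbreviation span :: "'a set" where
  "span \<equiv> pdl_generated A G"

lemma span_car: "x \<in> span \<Longrightarrow> x \<in> car A"
  by (induction rule: pdl_generated.induct) (use G_subset in auto)

sublocale meet_subslat A span
  by unfold_locales (auto simp: top_max span_car intro: pdl_generated.intros)

lemma maximal_omitting_prime:
  assumes Q: "maximal_omitting a Q" and x: "x \<in> span" and y: "y \<in> span" and xy: "jn A x y \<in> Q"
  shows "x \<in> Q \<or> y \<in> Q"
proof (rule ccontr)
  assume "\<not> (x \<in> Q \<or> y \<in> Q)"
  then obtain q1 q2 where q: "q1 \<in> Q" "hle A (mt A q1 x) a" "q2 \<in> Q" "hle A (mt A q2 y) a"
    using maximal_omitting_extend(2)[OF Q x] maximal_omitting_extend(2)[OF Q y] by blast
  have fQ: "S_filter Q" using Q by (rule maximal_omitting_filter)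
  have a: "a \<in> span"
    using maximal_omitting_extend(1)[OF Q x] \<open>\<not> (x \<in> Q \<or> y \<in> Q)\<close> by blast
  have c: "q1 \<in> car A" "q2 \<in> car A" "x \<in> car A" "y \<in> car A" "a \<in> car A"
    using q fQ filter_subset x y a span_car by blast+
  define q where "q = mt A q1 q2"
  have qQ: "q \<in> Q" unfolding q_def using filter_mt[OF fQ q(1,3)] .
  have qc: "q \<in> car A" unfolding q_def using c by simp
  have "hle A (mt A q x) a"
    using hle_trans[OF _ _ c(5) mt_mono[OF qc c(1) c(3) c(3)] q(2)] c qc unfolding q_def by simp
  moreover have "hle A (mt A q y) a"
    using hle_trans[OF _ _ c(5) mt_mono[OF qc c(2) c(4) c(4)] q(4)] c qc unfolding q_def by simp
  ultimately have "hle A (mt A q (jn A x y)) a"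
    using jn_least mt_jn_distrib c qc by simp
  moreover have "mt A q (jn A x y) \<in> Q" using filter_mt[OF fQ qQ xy] .
  ultimately show False using filter_up[OF fQ _ a] maximal_omitting_notin[OF Q] by blast
qed

lemma jn_mem_iff:
  assumes Q: "Q \<in> max_omitting_filters" and x: "x \<in> span" and y: "y \<in> span"
  shows "jn A x y \<in> Q \<longleftrightarrow> x \<in> Q \<or> y \<in> Q"
proof -
  obtain a where a: "maximal_omitting a Q" using Q unfolding max_omitting_filters_def by blast
  have fQ: "S_filter Q" using Q by (rule max_omitting_filters_filter)
  have "hle A x (jn A x y)" "hle A y (jn A x y)"
    using x y span_car jn_upper1 jn_upper2 by auto
  then show ?thesis
    using maximal_omitting_prime[OF a x y] filter_up[OF fQ _ pdl_generated.join[OF x y]] by blast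
qed

lemma bt_notin_max_omitting_filter:
  assumes "Q \<in> max_omitting_filters"
  shows "bt A \<notin> Q"
proof
  assume bt: "bt A \<in> Q"
  obtain a where a: "a \<in> span" "maximal_omitting a Q"
    using assms unfolding max_omitting_filters_def by blast
  have "a \<in> Q" using filter_up[OF maximal_omitting_filter[OF a(2)] bt a(1)] bt_hle span_car a(1) by blast
  then show False using maximal_omitting_notin[OF a(2)] by blast
qed

lemma ng_mem_iff:
  assumes P: "S_filter P" and x: "x \<in> span"
  shows "ng A x \<in> P \<longleftrightarrow> (\<forall>M. maximal_omitting (bt A) M \<longrightarrow> P \<subseteq> M \<longrightarrow> x \<notin> M)"
proof
  assume ng: "ng A x \<in> P"
  show "\<forall>M. maximal_omitting (bt A) M \<longrightarrow> P \<subseteq> M \<longrightarrow> x \<notin> M"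
  proof (intro allI impI notI)
    fix M assume M: "maximal_omitting (bt A) M" "P \<subseteq> M" "x \<in> M"
    then have "mt A (ng A x) x \<in> M" using filter_mt[OF maximal_omitting_filter[OF M(1)]] ng by blast
    then show False using mt_ng span_car[OF x] maximal_omitting_notin[OF M(1)] by simp
  qed
next
  assume H: "\<forall>M. maximal_omitting (bt A) M \<longrightarrow> P \<subseteq> M \<longrightarrow> x \<notin> M"
  show "ng A x \<in> P"
  proof (rule ccontr)
    assume ng: "ng A x \<notin> P"
    have "\<not> hle A (mt A q x) (bt A)" if q: "q \<in> P" for q
    proof
      have qc: "q \<in> car A" using filter_subset[OF P q] span_car by blast
      assume "hle A (mt A q x) (bt A)"
      then have "hle A q (ng A x)" using hle_bt_iff pseudocomplement qc span_car[OF x] by simp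
      then show False using filter_up[OF P q pdl_generated.neg[OF x]] ng by blast
    qed
    then obtain M where "maximal_omitting (bt A) M" "P \<subseteq> M" "x \<in> M"
      using ex_maximal_omitting_extend[OF P x] by blast
    then show False using H by blast
  qed
qed

(* Negation is evaluated in the maximal proper filters above P, and these are determined
   by their traces on G. *)
definition signature :: "'a set \<Rightarrow> 'a set \<times> 'a set set" where
  "signature P = (P \<inter> G, {M \<inter> G | M. maximal_omitting (bt A) M \<and> P \<subseteq> M})"

lemma signature_maximal_omitting_bt:
  assumes M: "maximal_omitting (bt A) M"
  shows "signature M = (M \<inter> G, {M \<inter> G})"
proof -
  have "M' = M" if "maximal_omitting (bt A) M'" "M \<subseteq> M'" for M'
    using M that unfolding maximal_omitting_def by blast
  then show ?thesis using M unfolding signature_def by blast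
qed

lemma maximal_omitting_bt_in: "maximal_omitting (bt A) M \<Longrightarrow> M \<in> max_omitting_filters"
  unfolding max_omitting_filters_def using pdl_generated.bot by blast

lemma ex_maximal_omitting_bt_same_signature:
  assumes sg: "signature P = signature P'" and M: "maximal_omitting (bt A) M" "P' \<subseteq> M"
  shows "\<exists>M0. maximal_omitting (bt A) M0 \<and> P \<subseteq> M0 \<and> signature M0 = signature M"
proof -
  have "M \<inter> G \<in> snd (signature P')" using M unfolding signature_def by auto
  then have "M \<inter> G \<in> snd (signature P)" using sg by simp
  then obtain M0 where M0: "maximal_omitting (bt A) M0" "P \<subseteq> M0" "M \<inter> G = M0 \<inter> G"
    unfolding signature_def by auto
  then show ?thesis
    using signature_maximal_omitting_bt[OF M0(1)] signature_maximal_omitting_bt[OF M(1)] by auto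
qed

lemma max_omitting_filter_determined:
  assumes "P \<in> max_omitting_filters" "P' \<in> max_omitting_filters" "signature P = signature P'"
  shows "P = P'"
proof -
  have "\<forall>P P'. P \<in> max_omitting_filters \<longrightarrow> P' \<in> max_omitting_filters \<longrightarrow>
          signature P = signature P' \<longrightarrow> (x \<in> P \<longleftrightarrow> x \<in> P')"
    if "x \<in> span" for x
    using that
  proof (induction rule: pdl_generated.induct)
    case (gen g)
    then show ?case unfolding signature_def by blast
  next
    case top
    then show ?case using filter_tp max_omitting_filters_filter by blast
  next
    case bot
    then show ?case using bt_notin_max_omitting_filter by blast
  next
    case (meet x y)
    then show ?case using filter_mt_iff[OF max_omitting_filters_filter meet.hyps] by blast
  next
    case (join x y)
    then show ?case using jn_mem_iff[OF _ join.hyps] by blast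
  next
    case (neg x)
    have transfer: "(\<forall>M. maximal_omitting (bt A) M \<longrightarrow> P \<subseteq> M \<longrightarrow> x \<notin> M) \<Longrightarrow>
                    (\<forall>M. maximal_omitting (bt A) M \<longrightarrow> P' \<subseteq> M \<longrightarrow> x \<notin> M)"
      if sg: "signature P = signature P'" for P P'
    proof (intro allI impI notI)
      fix M assume H: "\<forall>M. maximal_omitting (bt A) M \<longrightarrow> P \<subseteq> M \<longrightarrow> x \<notin> M"
        and M: "maximal_omitting (bt A) M" "P' \<subseteq> M" "x \<in> M"
      obtain M0 where M0: "maximal_omitting (bt A) M0" "P \<subseteq> M0" "signature M0 = signature M"
        using ex_maximal_omitting_bt_same_signature[OF sg M(1,2)] by blast
      have "x \<in> M0"
        using neg.IH maximal_omitting_bt_in[OF M0(1)] maximal_omitting_bt_in[OF M(1)] M0(3) M(3) by blast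
      then show False using H M0(1,2) by blast
    qed
    show ?case
    proof (intro allI impI)
      fix P P' assume P: "P \<in> max_omitting_filters" and P': "P' \<in> max_omitting_filters"
        and sg: "signature P = signature P'"
      show "ng A x \<in> P \<longleftrightarrow> ng A x \<in> P'"
        using ng_mem_iff[OF max_omitting_filters_filter[OF P] neg.hyps]
          ng_mem_iff[OF max_omitting_filters_filter[OF P'] neg.hyps]
          transfer[OF sg] transfer[OF sg[symmetric]]
        by blast
    qed
  qed
  then show ?thesis
    using assms max_omitting_filters_filter filter_subset by blast
qed

lemma finite_max_omitting_filters: "finite max_omitting_filters"
proof (rule inj_on_finite)
  show "inj_on signature max_omitting_filters"
    by (rule inj_onI) (rule max_omitting_filter_determined)
  show "signature ` max_omitting_filters \<subseteq> Pow G \<times> Pow (Pow G)"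
    unfolding signature_def by auto
  show "finite (Pow G \<times> Pow (Pow G))"
    using finite_G by simp
qed

lemma finite_span: "finite span"
  using finite_if_finite_max_omitting_filters[OF finite_max_omitting_filters] .

(* The relative pseudocomplement of x and y is the largest of the finitely many c with
   hle A (mt A c x) y; by distributivity these c are closed under joins. *)
lemma S_residuated_span: S_residuated
  unfolding S_residuated_def
proof (intro ballI)
  fix x y assume x: "x \<in> span" and y: "y \<in> span"
  have xc: "x \<in> car A" and yc: "y \<in> car A" using x y span_car by auto
  let ?T = "{c \<in> span. hle A (mt A c x) y}"
  have "\<exists>m\<in>?T. \<forall>c\<in>?T. hle A c m"
  proof (rule finite_closed_ex_least[where f = "jn A" and R = "\<lambda>a b. hle A b a"])
    show "finite ?T" using finite_span by simp
    show "?T \<noteq> {}" using y xc yc by auto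
    show "jn A a b \<in> ?T \<and> hle A a (jn A a b) \<and> hle A b (jn A a b)" if ab: "a \<in> ?T" "b \<in> ?T" for a b
    proof -
      have ac: "a \<in> car A" and bc: "b \<in> car A" using ab span_car by auto
      have "mt A (jn A a b) x = jn A (mt A x a) (mt A x b)"
        using mt_jn_distrib[OF xc ac bc] mt_comm[of "jn A a b" x] ac bc xc by simp
      also have "hle A \<dots> y"
        using ab mt_comm[OF ac xc] mt_comm[OF bc xc] jn_least[of "mt A x a" "mt A x b" y] ac bc xc yc
        by simp
      finally have "hle A (mt A (jn A a b) x) y" .
      moreover have "jn A a b \<in> span" using ab by (blast intro: pdl_generated.join)
      ultimately show ?thesis using jn_upper1[OF ac bc] jn_upper2[OF ac bc] by blast
    qed
    show "hle A w u" if "u \<in> ?T" "v \<in> ?T" "w \<in> ?T" "hle A v u" "hle A w v" for u v w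
      using hle_trans_S that by blast
    show "hle A u u" if "u \<in> ?T" for u
      using that in_car by simp
  qed
  then obtain m where m: "m \<in> ?T" "\<forall>c\<in>?T. hle A c m" by blast
  have "hle A (mt A c x) y \<longleftrightarrow> hle A c m" if c: "c \<in> span" for c
  proof
    assume "hle A c m"
    then have "hle A (mt A c x) (mt A m x)" using mt_mono span_car c m(1) xc by simp
    then show "hle A (mt A c x) y" using hle_trans_S mt_in_S c x m(1) y by blast
  qed (use m c in blast)
  then show "\<exists>z\<in>span. \<forall>c\<in>span. hle A (mt A c x) y \<longleftrightarrow> hle A c z" using m(1) by blast
qed

lemma S_join_span: "x \<in> span \<Longrightarrow> y \<in> span \<Longrightarrow> S_join x y = jn A x y"
  by (rule S_join_eqI[OF finite_span])
    (use pdl_generated.join jn_upper1 jn_upper2 jn_least span_car in auto)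

lemma S_bot_span: "S_bot = bt A"
  by (rule S_bot_eqI[OF finite_span pdl_generated.bot]) (use bt_hle span_car in blast)

lemma S_imp_bt_span: "x \<in> span \<Longrightarrow> S_imp x (bt A) = ng A x"
  by (rule S_imp_eqI[OF S_residuated_span _ pdl_generated.bot pdl_generated.neg])
    (use hle_bt_iff pseudocomplement span_car in auto)

end

section \<open>Universal sentences, embeddings and ultraproducts\<close>

definition op_closed :: "('a, 'b) halg_scheme \<Rightarrow> bool" where
  "op_closed C \<longleftrightarrow>
     (\<forall>x\<in>car C. \<forall>y\<in>car C. mt C x y \<in> car C \<and> jn C x y \<in> car C \<and> im C x y \<in> car C)
     \<and> (\<forall>x\<in>car C. ng C x \<in> car C) \<and> bt C \<in> car C \<and> tp C \<in> car C"

lemma eval_in_car: "op_closed C \<Longrightarrow> \<forall>n. \<sigma> n \<in> car C \<Longrightarrow> eval C \<sigma> t \<in> car C"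
  by (induction t) (auto simp: op_closed_def)

lemma reduct_simps [simp]:
  "car (reduct C) = car C" "mt (reduct C) = mt C" "jn (reduct C) = jn C" "im (reduct C) = im C"
  "ng (reduct C) = (\<lambda>x. im C x (bt C))" "bt (reduct C) = bt C" "tp (reduct C) = tp C"
  by (simp_all add: reduct_def)

lemma op_closed_reduct: "in_var HA C \<Longrightarrow> op_closed (reduct C)"
  by (auto simp: op_closed_def is_lattice_def meet_semilattice_def residuated_def top_max_def bot_min_def)

lemma eval_emb:
  assumes emb: "emb K C A e" and cl: "op_closed C" and \<sigma>: "\<forall>n. \<sigma> n \<in> car C" and t: "trm_in K t"
  shows "e (eval C \<sigma> t) = eval A (\<lambda>n. e (\<sigma> n)) t"
  using t by (induction t) (use emb eval_in_car[OF cl \<sigma>] cl in \<open>auto simp: emb_def op_closed_def\<close>)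

lemma holds_emb:
  assumes emb: "emb K C A e" and cl: "op_closed C" and \<sigma>: "\<forall>n. \<sigma> n \<in> car C" and p: "fm_in K p"
  shows "holds C \<sigma> p \<longleftrightarrow> holds A (\<lambda>n. e (\<sigma> n)) p"
  using p
proof (induction p)
  case (FEq s t)
  have "inj_on e (car C)" using emb unfolding emb_def by blast
  then have "eval C \<sigma> s = eval C \<sigma> t \<longleftrightarrow> e (eval C \<sigma> s) = e (eval C \<sigma> t)"
    using eval_in_car[OF cl \<sigma>] by (simp add: inj_on_eq_iff)
  then show ?case using FEq eval_emb[OF emb cl \<sigma>] by simp
qed simp_all

lemma univ_true_emb:
  assumes emb: "emb K C A e" and cl: "op_closed C" and p: "fm_in K p" and A: "univ_true A p"
  shows "univ_true C p"
  unfolding univ_true_def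
proof (intro allI impI)
  fix \<sigma> :: "nat \<Rightarrow> 'a" assume \<sigma>: "\<forall>n. \<sigma> n \<in> car C"
  then have "\<forall>n. e (\<sigma> n) \<in> car A" using emb unfolding emb_def by auto
  then have "holds A (\<lambda>n. e (\<sigma> n)) p"
    using spec[OF A[unfolded univ_true_def], of "\<lambda>n. e (\<sigma> n)"] by blast
  then show "holds C \<sigma> p" using holds_emb[OF emb cl \<sigma> p] by blast
qed

locale ultrafilter =
  fixes U :: "'i filter"
  assumes proper: "U \<noteq> bot"
    and ultra: "eventually P U \<or> eventually (\<lambda>i. \<not> P i) U"
begin

lemma eventually_not_iff: "eventually (\<lambda>i. \<not> P i) U \<longleftrightarrow> \<not> eventually P U"
proof
  assume "eventually (\<lambda>i. \<not> P i) U"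
  then show "\<not> eventually P U"
    using proper eventually_False by (auto dest: eventually_conj)
qed (use ultra in blast)

lemma eventually_disj_iff: "eventually (\<lambda>i. P i \<or> Q i) U \<longleftrightarrow> eventually P U \<or> eventually Q U"
proof
  assume PQ: "eventually (\<lambda>i. P i \<or> Q i) U"
  show "eventually P U \<or> eventually Q U"
  proof (rule ccontr)
    assume "\<not> (eventually P U \<or> eventually Q U)"
    then have "eventually (\<lambda>i. \<not> P i \<and> \<not> Q i) U" using eventually_not_iff eventually_conj by blast
    with PQ have "eventually (\<lambda>i. False) U" by (auto elim: eventually_elim2)
    then show False using proper eventually_False by blast
  qed
qed (auto elim: eventually_mono)

end

lemma ultrafilter_if_maximal:
  assumes proper: "U \<noteq> bot" and max: "\<And>G. G \<noteq> bot \<Longrightarrow> G \<le> U \<Longrightarrow> G = U"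
  shows "ultrafilter U"
proof
  show "eventually P U \<or> eventually (\<lambda>i. \<not> P i) U" for P
  proof (rule disjCI)
    assume "\<not> eventually (\<lambda>i. \<not> P i) U"
    then have "inf U (principal {i. P i}) \<noteq> bot"
      by (simp add: eventually_inf_principal flip: eventually_False)
    then have "inf U (principal {i. P i}) = U" using max by simp
    moreover have "eventually P (inf U (principal {i. P i}))"
      by (simp add: eventually_inf_principal)
    ultimately show "eventually P U" by simp
  qed
qed (rule proper)

(* Finer filters are smaller, so Zorn's lemma is applied to the reversed order. *)
lemma ex_maximal_proper_filter_le:
  fixes F :: "'i filter"
  assumes F: "F \<noteq> bot"
  shows "\<exists>U\<in>{G. G \<noteq> bot \<and> G \<le> F}. \<forall>G\<in>{G. G \<noteq> bot \<and> G \<le> F}. G \<le> U \<longrightarrow> G = U"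
proof (rule predicate_Zorn[where P = "\<lambda>G H. H \<le> G"])
  let ?A = "{G. G \<noteq> bot \<and> G \<le> F}"
  show "partial_order_on ?A (relation_of (\<lambda>G H. H \<le> G) ?A)"
    by (auto simp: partial_order_on_def preorder_on_def refl_on_def trans_def antisym_def relation_of_def)
  show "\<exists>u\<in>?A. \<forall>G\<in>\<CC>. u \<le> G" if "\<CC> \<in> Chains (relation_of (\<lambda>G H. H \<le> G) ?A)" for \<CC>
  proof (cases "\<CC> = {}")
    case True
    then show ?thesis using F by blast
  next
    case False
    have sub: "\<CC> \<subseteq> ?A" and chain: "\<And>G H. G \<in> \<CC> \<Longrightarrow> H \<in> \<CC> \<Longrightarrow> G \<le> H \<or> H \<le> G"
      using that unfolding Chains_def relation_of_def by auto
    have "eventually (\<lambda>i. False) (Inf \<CC>) \<longleftrightarrow> (\<exists>G\<in>\<CC>. eventually (\<lambda>i. False) G)"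
      by (rule eventually_Inf_base[OF False]) (metis chain inf.absorb_iff1 inf.absorb_iff2)
    then have "Inf \<CC> \<noteq> bot" using sub eventually_False by auto
    moreover obtain G where G: "G \<in> \<CC>" using False by blast
    then have "G \<le> F" using sub by blast
    then have "Inf \<CC> \<le> F" using Inf_lower[OF G] by (rule order_trans[rotated])
    ultimately show ?thesis by (auto intro: Inf_lower)
  qed
qed

lemma ex_ultrafilter_le:
  fixes F :: "'i filter"
  assumes "F \<noteq> bot"
  shows "\<exists>U. ultrafilter U \<and> U \<le> F"
proof -
  obtain U where U: "U \<noteq> bot" "U \<le> F" and max: "\<And>G. G \<noteq> bot \<Longrightarrow> G \<le> F \<Longrightarrow> G \<le> U \<Longrightarrow> G = U"
    using ex_maximal_proper_filter_le[OF assms] by blast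
  have "ultrafilter U"
    by (rule ultrafilter_if_maximal[OF U(1)]) (use max U(2) order_trans in blast)
  then show ?thesis using U(2) by blast
qed

definition ult_rep :: "'i filter \<Rightarrow> ('i \<Rightarrow> 'a) \<Rightarrow> 'i \<Rightarrow> 'a" where
  "ult_rep U f = (SOME g. eventually (\<lambda>i. g i = f i) U)"

(* Elements are the representatives chosen by ult_rep, so that equality in the ultraproduct
   is equality U-almost everywhere. *)
definition ultraproduct :: "'i filter \<Rightarrow> ('i \<Rightarrow> 'a halg) \<Rightarrow> ('i \<Rightarrow> 'a) halg" where
  "ultraproduct U C =
    \<lparr>car = {ult_rep U f | f. eventually (\<lambda>i. f i \<in> car (C i)) U},
     mt = \<lambda>u v. ult_rep U (\<lambda>i. mt (C i) (u i) (v i)),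
     jn = \<lambda>u v. ult_rep U (\<lambda>i. jn (C i) (u i) (v i)),
     im = \<lambda>u v. ult_rep U (\<lambda>i. im (C i) (u i) (v i)),
     ng = \<lambda>u. ult_rep U (\<lambda>i. ng (C i) (u i)),
     bt = ult_rep U (\<lambda>i. bt (C i)),
     tp = ult_rep U (\<lambda>i. tp (C i))\<rparr>"

lemma ultraproduct_simps [simp]:
  "car (ultraproduct U C) = {ult_rep U f | f. eventually (\<lambda>i. f i \<in> car (C i)) U}"
  "mt (ultraproduct U C) u v = ult_rep U (\<lambda>i. mt (C i) (u i) (v i))"
  "jn (ultraproduct U C) u v = ult_rep U (\<lambda>i. jn (C i) (u i) (v i))"
  "im (ultraproduct U C) u v = ult_rep U (\<lambda>i. im (C i) (u i) (v i))"
  "ng (ultraproduct U C) u = ult_rep U (\<lambda>i. ng (C i) (u i))"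
  "bt (ultraproduct U C) = ult_rep U (\<lambda>i. bt (C i))"
  "tp (ultraproduct U C) = ult_rep U (\<lambda>i. tp (C i))"
  by (simp_all add: ultraproduct_def)

lemma eventually_ult_rep: "eventually (\<lambda>i. ult_rep U f i = f i) U"
  unfolding ult_rep_def by (rule someI[of _ f]) simp

lemma ult_rep_eq_iff: "ult_rep U f = ult_rep U g \<longleftrightarrow> eventually (\<lambda>i. f i = g i) U"
proof
  assume "ult_rep U f = ult_rep U g"
  then show "eventually (\<lambda>i. f i = g i) U"
    using eventually_ult_rep[of U f] eventually_ult_rep[of U g] by (auto elim: eventually_elim2)
next
  assume fg: "eventually (\<lambda>i. f i = g i) U"
  have "eventually (\<lambda>i. h i = f i) U \<longleftrightarrow> eventually (\<lambda>i. h i = g i) U" for h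
    using fg by (auto elim: eventually_elim2)
  then show "ult_rep U f = ult_rep U g" unfolding ult_rep_def by simp
qed

lemma ult_rep_idem: "ult_rep U (ult_rep U f) = ult_rep U f"
  using eventually_ult_rep ult_rep_eq_iff by blast

lemma eventually_car_ultraproduct:
  assumes "u \<in> car (ultraproduct U C)"
  shows "eventually (\<lambda>i. u i \<in> car (C i)) U"
proof -
  obtain f where u: "u = ult_rep U f" and f: "eventually (\<lambda>i. f i \<in> car (C i)) U"
    using assms by auto
  show ?thesis using eventually_ult_rep[of U f] f unfolding u by eventually_elim simp
qed

lemma eval_ultraproduct:
  assumes "\<forall>n. eventually (\<lambda>i. \<sigma> n i = \<rho> n i) U"
  shows "eventually (\<lambda>i. eval (ultraproduct U C) \<sigma> t i = eval (C i) (\<lambda>n. \<rho> n i) t) U"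
proof (induction t)
  case (V n)
  then show ?case using assms by simp
next
  case (TMt s t)
  let ?f = "\<lambda>i. mt (C i) (eval (ultraproduct U C) \<sigma> s i) (eval (ultraproduct U C) \<sigma> t i)"
  show ?case using eventually_ult_rep[of U ?f] TMt.IH by eventually_elim simp
next
  case (TJn s t)
  let ?f = "\<lambda>i. jn (C i) (eval (ultraproduct U C) \<sigma> s i) (eval (ultraproduct U C) \<sigma> t i)"
  show ?case using eventually_ult_rep[of U ?f] TJn.IH by eventually_elim simp
next
  case (TIm s t)
  let ?f = "\<lambda>i. im (C i) (eval (ultraproduct U C) \<sigma> s i) (eval (ultraproduct U C) \<sigma> t i)"
  show ?case using eventually_ult_rep[of U ?f] TIm.IH by eventually_elim simp
next
  case (TNg s)
  let ?f = "\<lambda>i. ng (C i) (eval (ultraproduct U C) \<sigma> s i)"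
  show ?case using eventually_ult_rep[of U ?f] TNg.IH by eventually_elim simp
qed (simp_all add: eventually_ult_rep)

lemma ult_rep_range_eq_iff:
  "u \<in> range (ult_rep U) \<Longrightarrow> v \<in> range (ult_rep U) \<Longrightarrow> u = v \<longleftrightarrow> eventually (\<lambda>i. u i = v i) U"
  using ult_rep_idem ult_rep_eq_iff by (metis rangeE)

lemma eval_ultraproduct_range:
  "\<forall>n. \<sigma> n \<in> range (ult_rep U) \<Longrightarrow> eval (ultraproduct U C) \<sigma> t \<in> range (ult_rep U)"
  by (cases t) auto

lemma op_closed_ultraproduct:
  assumes cl: "\<And>i. op_closed (C i)"
  shows "op_closed (ultraproduct U C)"
proof -
  have op2: "ult_rep U (\<lambda>i. f (C i) (u i) (v i)) \<in> car (ultraproduct U C)"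
    if "u \<in> car (ultraproduct U C)" "v \<in> car (ultraproduct U C)"
      and f: "\<And>i x y. x \<in> car (C i) \<Longrightarrow> y \<in> car (C i) \<Longrightarrow> f (C i) x y \<in> car (C i)" for u v f
  proof -
    have "eventually (\<lambda>i. f (C i) (u i) (v i) \<in> car (C i)) U"
      using eventually_car_ultraproduct[OF that(1)] eventually_car_ultraproduct[OF that(2)]
      by eventually_elim (rule f)
    then show ?thesis by auto
  qed
  have "ult_rep U (\<lambda>i. ng (C i) (u i)) \<in> car (ultraproduct U C)" if "u \<in> car (ultraproduct U C)" for u
  proof -
    have "eventually (\<lambda>i. ng (C i) (u i) \<in> car (C i)) U"
      using eventually_car_ultraproduct[OF that] by eventually_elim (use cl in \<open>simp add: op_closed_def\<close>)
    then show ?thesis by auto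
  qed
  moreover have "\<And>i. bt (C i) \<in> car (C i)" "\<And>i. tp (C i) \<in> car (C i)"
    using cl unfolding op_closed_def by blast+
  ultimately show ?thesis
    unfolding op_closed_def using op2[of _ _ mt] op2[of _ _ jn] op2[of _ _ im] cl
    by (auto simp: op_closed_def)
qed

lemma reduct_ultraproduct: "reduct (ultraproduct U C) = ultraproduct U (\<lambda>i. reduct (C i))"
proof -
  have "ult_rep U (\<lambda>i. im (C i) (u i) (ult_rep U (\<lambda>i. bt (C i)) i))
      = ult_rep U (\<lambda>i. im (C i) (u i) (bt (C i)))"
    for u
    unfolding ult_rep_eq_iff using eventually_ult_rep[of U "\<lambda>i. bt (C i)"] by eventually_elim simp
  then show ?thesis unfolding reduct_def ultraproduct_def by simp
qed

context ultrafilter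
begin

lemma holds_ultraproduct:
  assumes range: "\<forall>n. \<sigma> n \<in> range (ult_rep U)" and eq: "\<forall>n. eventually (\<lambda>i. \<sigma> n i = \<rho> n i) U"
  shows "holds (ultraproduct U C) \<sigma> p \<longleftrightarrow> eventually (\<lambda>i. holds (C i) (\<lambda>n. \<rho> n i) p) U"
proof (induction p)
  case (FEq s t)
  have "holds (ultraproduct U C) \<sigma> (FEq s t) \<longleftrightarrow>
        eventually (\<lambda>i. eval (ultraproduct U C) \<sigma> s i = eval (ultraproduct U C) \<sigma> t i) U"
    using ult_rep_range_eq_iff[OF eval_ultraproduct_range[OF range] eval_ultraproduct_range[OF range]]
    by simp
  also have "\<dots> \<longleftrightarrow> eventually (\<lambda>i. eval (C i) (\<lambda>n. \<rho> n i) s = eval (C i) (\<lambda>n. \<rho> n i) t) U"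
    by (rule eventually_subst)
      (use eval_ultraproduct[OF eq, of C s] eval_ultraproduct[OF eq, of C t] in \<open>eventually_elim, simp\<close>)
  finally show ?case by simp
next
  case (FNot p)
  then show ?case using eventually_not_iff by simp
next
  case (FAnd p q)
  then show ?case by (simp add: eventually_conj_iff)
next
  case (FOr p q)
  then show ?case by (simp add: eventually_disj_iff)
qed

lemma univ_true_ultraproduct:
  assumes tp: "\<And>i. tp (C i) \<in> car (C i)" and univ: "\<And>i. univ_true (C i) p"
  shows "univ_true (ultraproduct U C) p"
  unfolding univ_true_def
proof (intro allI impI)
  fix \<sigma> :: "nat \<Rightarrow> 'i \<Rightarrow> 'a" assume \<sigma>: "\<forall>n. \<sigma> n \<in> car (ultraproduct U C)"
  define \<rho> where "\<rho> n i = (if \<sigma> n i \<in> car (C i) then \<sigma> n i else tp (C i))" for n i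
  have "eventually (\<lambda>i. \<sigma> n i = \<rho> n i) U" for n
    using eventually_car_ultraproduct[OF \<sigma>[rule_format, of n]] by eventually_elim (simp add: \<rho>_def)
  then have "holds (ultraproduct U C) \<sigma> p \<longleftrightarrow> eventually (\<lambda>i. holds (C i) (\<lambda>n. \<rho> n i) p) U"
    using \<sigma> by (intro holds_ultraproduct) (auto simp: image_iff)
  moreover have "holds (C i) (\<lambda>n. \<rho> n i) p" for i
    using univ tp unfolding univ_true_def \<rho>_def by simp
  ultimately show "holds (ultraproduct U C) \<sigma> p" by simp
qed

lemma in_U_ultraproduct:
  assumes emb: "\<And>i. emb K (D i) A (e i)" and cl: "\<And>i. op_closed (D i)"
  shows "in_U K A (ultraproduct U D)"
  unfolding in_U_def
proof (intro allI impI)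
  fix p assume "fm_in K p" "univ_true A p"
  then have "univ_true (D i) p" for i using univ_true_emb[OF emb cl] by blast
  moreover have "tp (D i) \<in> car (D i)" for i using cl unfolding op_closed_def by blast
  ultimately show "univ_true (ultraproduct U D) p" using univ_true_ultraproduct by blast
qed

lemma ult_rep_const_op2:
  assumes "eventually (\<lambda>i. x \<in> car (D i)) U" "eventually (\<lambda>i. y \<in> car (D i)) U"
    and "\<And>i. x \<in> car (D i) \<Longrightarrow> y \<in> car (D i) \<Longrightarrow> h i x y = g x y"
  shows "ult_rep U (\<lambda>_. g x y) = ult_rep U (\<lambda>i. h i (ult_rep U (\<lambda>_. x) i) (ult_rep U (\<lambda>_. y) i))"
  unfolding ult_rep_eq_iff
  using eventually_ult_rep[of U "\<lambda>_. x"] eventually_ult_rep[of U "\<lambda>_. y"] assms(1,2)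
  by eventually_elim (simp add: assms(3))

lemma emb_diagonal:
  assumes sub: "\<And>i. emb K (D i) A id"
    and eventually_in: "\<And>x. x \<in> car A \<Longrightarrow> eventually (\<lambda>i. x \<in> car (D i)) U"
  shows "emb K A (ultraproduct U D) (\<lambda>x. ult_rep U (\<lambda>_. x))"
proof -
  let ?d = "\<lambda>x. ult_rep U (\<lambda>_. x)"
  have d: "eventually (\<lambda>i. ?d x i = x) U" for x :: 'a by (rule eventually_ult_rep)
  have ops: "\<And>i x y. x \<in> car (D i) \<Longrightarrow> y \<in> car (D i) \<Longrightarrow> mt (D i) x y = mt A x y"
    "\<And>i x y. has_join K \<Longrightarrow> x \<in> car (D i) \<Longrightarrow> y \<in> car (D i) \<Longrightarrow> jn (D i) x y = jn A x y"
    "\<And>i x y. has_imp K \<Longrightarrow> x \<in> car (D i) \<Longrightarrow> y \<in> car (D i) \<Longrightarrow> im (D i) x y = im A x y"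
    "\<And>i x. has_neg K \<Longrightarrow> x \<in> car (D i) \<Longrightarrow> ng (D i) x = ng A x"
    "\<And>i. has_bot K \<Longrightarrow> bt (D i) = bt A" "\<And>i. tp (D i) = tp A"
    using sub unfolding emb_def by auto
  show ?thesis
    unfolding emb_def
  proof (intro conjI ballI impI)
    show "?d ` car A \<subseteq> car (ultraproduct U D)"
      using eventually_in by auto
    show "inj_on ?d (car A)"
      by (rule inj_onI) (simp add: ult_rep_eq_iff eventually_const_iff proper)
    show "?d (mt A x y) = mt (ultraproduct U D) (?d x) (?d y)" if "x \<in> car A" "y \<in> car A" for x y
      using ult_rep_const_op2[where g = "mt A" and h = "\<lambda>i. mt (D i)", OF eventually_in eventually_in]
        ops(1) that by simp
    show "?d (jn A x y) = jn (ultraproduct U D) (?d x) (?d y)"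
      if "has_join K" "x \<in> car A" "y \<in> car A" for x y
      using ult_rep_const_op2[where g = "jn A" and h = "\<lambda>i. jn (D i)", OF eventually_in eventually_in]
        ops(2)[OF that(1)] that(2,3) by simp
    show "?d (im A x y) = im (ultraproduct U D) (?d x) (?d y)"
      if "has_imp K" "x \<in> car A" "y \<in> car A" for x y
      using ult_rep_const_op2[where g = "im A" and h = "\<lambda>i. im (D i)", OF eventually_in eventually_in]
        ops(3)[OF that(1)] that(2,3) by simp
    show "?d (ng A x) = ng (ultraproduct U D) (?d x)" if "has_neg K" "x \<in> car A" for x
      unfolding ultraproduct_simps ult_rep_eq_iff
      using d[of x] eventually_in[OF that(2)] by eventually_elim (simp add: ops(4)[OF that(1)])
    show "?d (bt A) = bt (ultraproduct U D)" if "has_bot K"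
      using ops(5)[OF that] by simp
    show "?d (tp A) = tp (ultraproduct U D)"
      using ops(6) by simp
  qed
qed
end

section \<open>Heyting algebras as a universal class\<close>

definition le_fm :: "trm \<Rightarrow> trm \<Rightarrow> fm" where
  "le_fm s t = FEq (TMt s t) s"

definition iff_fm :: "fm \<Rightarrow> fm \<Rightarrow> fm" where
  "iff_fm p q = FOr (FAnd p q) (FAnd (FNot p) (FNot q))"

definition HA_laws :: "('a, 'b) halg_scheme \<Rightarrow> 'a \<Rightarrow> 'a \<Rightarrow> 'a \<Rightarrow> bool" where
  "HA_laws C x y z \<longleftrightarrow>
     mt C (mt C x y) z = mt C x (mt C y z) \<and> mt C x y = mt C y x \<and> mt C x x = x \<and>
     jn C (jn C x y) z = jn C x (jn C y z) \<and> jn C x y = jn C y x \<and> jn C x x = x \<and>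
     mt C x (jn C x y) = x \<and> jn C x (mt C x y) = x \<and>
     hle C x (tp C) \<and> hle C (bt C) x \<and> (hle C (mt C z x) y \<longleftrightarrow> hle C z (im C x y))"

definition HA_axioms :: fm where
  "HA_axioms = (let x = V 0; y = V 1; z = V 2 in
     FAnd (FEq (TMt (TMt x y) z) (TMt x (TMt y z)))
    (FAnd (FEq (TMt x y) (TMt y x))
    (FAnd (FEq (TMt x x) x)
    (FAnd (FEq (TJn (TJn x y) z) (TJn x (TJn y z)))
    (FAnd (FEq (TJn x y) (TJn y x))
    (FAnd (FEq (TJn x x) x)
    (FAnd (FEq (TMt x (TJn x y)) x)
    (FAnd (FEq (TJn x (TMt x y)) x)
    (FAnd (le_fm x TTp)
    (FAnd (le_fm TBt x)
          (iff_fm (le_fm (TMt z x) y) (le_fm z (TIm x y)))))))))))))"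

lemma holds_HA_axioms: "holds C \<sigma> HA_axioms \<longleftrightarrow> HA_laws C (\<sigma> 0) (\<sigma> 1) (\<sigma> 2)"
  by (auto simp: HA_axioms_def HA_laws_def le_fm_def iff_fm_def hle_def Let_def)

lemma univ_true_HA_axioms:
  "univ_true C HA_axioms \<longleftrightarrow> (\<forall>x\<in>car C. \<forall>y\<in>car C. \<forall>z\<in>car C. HA_laws C x y z)"
proof
  assume H: "univ_true C HA_axioms"
  show "\<forall>x\<in>car C. \<forall>y\<in>car C. \<forall>z\<in>car C. HA_laws C x y z"
  proof (intro ballI)
    fix x y z assume "x \<in> car C" "y \<in> car C" "z \<in> car C"
    then have "holds C (\<lambda>n. if n = 0 then x else if n = 1 then y else z) HA_axioms"
      using H unfolding univ_true_def by simp
    then show "HA_laws C x y z" by (simp add: holds_HA_axioms)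
  qed
qed (simp add: univ_true_def holds_HA_axioms)

lemma HA_laws_if_in_var_HA:
  assumes HA: "in_var HA C" and xyz: "x \<in> car C" "y \<in> car C" "z \<in> car C"
  shows "HA_laws C x y z"
proof -
  have lat: "is_lattice C" and tm: "top_max C" and res: "residuated C" and bm: "bot_min C"
    using HA by simp_all
  have msl: "meet_semilattice C" using lat unfolding is_lattice_def by blast
  show ?thesis
    unfolding HA_laws_def
  proof (intro conjI)
    show "mt C (mt C x y) z = mt C x (mt C y z)" "mt C x y = mt C y x" "mt C x x = x"
      using msl xyz unfolding meet_semilattice_def by blast+
    show "jn C (jn C x y) z = jn C x (jn C y z)" "jn C x y = jn C y x" "jn C x x = x"
      "mt C x (jn C x y) = x" "jn C x (mt C x y) = x"
      using lat xyz unfolding is_lattice_def by blast+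
    show "hle C x (tp C)" using tm xyz unfolding top_max_def by blast
    show "hle C (bt C) x" using bm xyz unfolding bot_min_def by blast
    show "hle C (mt C z x) y \<longleftrightarrow> hle C z (im C x y)" using res xyz unfolding residuated_def by blast
  qed
qed

lemma in_var_HA_if_HA_laws:
  fixes C :: "'a halg"
  assumes cl: "op_closed (reduct C)"
    and laws: "\<And>x y z. x \<in> car C \<Longrightarrow> y \<in> car C \<Longrightarrow> z \<in> car C \<Longrightarrow> HA_laws C x y z"
  shows "in_var HA C"
proof -
  have closed: "mt C x y \<in> car C" "jn C x y \<in> car C" "im C x y \<in> car C"
    if "x \<in> car C" "y \<in> car C" for x y
    using cl that unfolding op_closed_def by simp_all
  have one: "mt C x x = x \<and> jn C x x = x \<and> hle C x (tp C) \<and> hle C (bt C) x" if "x \<in> car C" for x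
    using laws[OF that that that] unfolding HA_laws_def by blast
  have two: "mt C x y = mt C y x \<and> jn C x y = jn C y x \<and> mt C x (jn C x y) = x \<and> jn C x (mt C x y) = x"
    if "x \<in> car C" "y \<in> car C" for x y
    using laws[OF that that(1)] unfolding HA_laws_def by blast
  have assoc: "mt C (mt C x y) z = mt C x (mt C y z) \<and> jn C (jn C x y) z = jn C x (jn C y z)"
    and res: "hle C (mt C z x) y \<longleftrightarrow> hle C z (im C x y)"
    if "x \<in> car C" "y \<in> car C" "z \<in> car C" for x y z
    using laws[OF that] unfolding HA_laws_def by blast+
  have "meet_semilattice C"
    unfolding meet_semilattice_def using closed one two assoc by simp
  moreover have "is_lattice C"
    unfolding is_lattice_def using calculation closed one two assoc by simp
  moreover have "top_max C" "bot_min C"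
    unfolding top_max_def bot_min_def using cl one by (simp_all add: op_closed_def)
  moreover have "residuated C"
    unfolding residuated_def using closed res by simp
  ultimately show ?thesis by simp
qed

lemma in_var_HA_iff:
  fixes C :: "'a halg"
  shows "in_var HA C \<longleftrightarrow> op_closed (reduct C) \<and> univ_true C HA_axioms"
  using HA_laws_if_in_var_HA in_var_HA_if_HA_laws op_closed_reduct univ_true_HA_axioms by metis

context ultrafilter
begin

lemma in_var_HA_ultraproduct:
  assumes HA: "\<And>i. in_var HA (C i)"
  shows "in_var HA (ultraproduct U C)"
proof -
  have cl: "\<And>i. op_closed (reduct (C i))" and ax: "\<And>i. univ_true (C i) HA_axioms"
    using HA in_var_HA_iff by blast+
  have "op_closed (reduct (ultraproduct U C))"
    unfolding reduct_ultraproduct by (rule op_closed_ultraproduct[OF cl])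
  moreover have "univ_true (ultraproduct U C) HA_axioms"
    using univ_true_ultraproduct[OF _ ax] cl unfolding op_closed_def by simp
  ultimately show ?thesis using in_var_HA_iff by blast
qed

end

definition transport :: "('a \<Rightarrow> 'c) \<Rightarrow> 'a halg \<Rightarrow> 'c halg" where
  "transport j C =
    \<lparr>car = j ` car C,
     mt = \<lambda>u v. j (mt C (inv j u) (inv j v)), jn = \<lambda>u v. j (jn C (inv j u) (inv j v)),
     im = \<lambda>u v. j (im C (inv j u) (inv j v)), ng = \<lambda>u. j (ng C (inv j u)),
     bt = j (bt C), tp = j (tp C)\<rparr>"

context
  fixes j :: "'a \<Rightarrow> 'c"
  assumes inj: "inj j"
begin

lemma eval_transport: "eval (transport j C) (\<lambda>n. j (\<sigma> n)) t = j (eval C \<sigma> t)"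
  by (induction t) (simp_all add: transport_def inj)

lemma holds_transport: "holds (transport j C) (\<lambda>n. j (\<sigma> n)) p \<longleftrightarrow> holds C \<sigma> p"
  by (induction p) (simp_all add: eval_transport inj_eq[OF inj])

lemma univ_true_transport: "univ_true (transport j C) p \<longleftrightarrow> univ_true C p"
proof
  assume H: "univ_true (transport j C) p"
  show "univ_true C p"
    unfolding univ_true_def
  proof (intro allI impI)
    fix \<sigma> :: "nat \<Rightarrow> 'a" assume "\<forall>n. \<sigma> n \<in> car C"
    then have "holds (transport j C) (\<lambda>n. j (\<sigma> n)) p"
      using H unfolding univ_true_def by (simp add: transport_def)
    then show "holds C \<sigma> p" by (simp add: holds_transport)
  qed
next
  assume H: "univ_true C p"
  show "univ_true (transport j C) p"
    unfolding univ_true_def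
  proof (intro allI impI)
    fix \<tau> :: "nat \<Rightarrow> 'c" assume \<tau>: "\<forall>n. \<tau> n \<in> car (transport j C)"
    have "inv j (\<tau> n) \<in> car C \<and> j (inv j (\<tau> n)) = \<tau> n" for n
    proof -
      obtain x where "x \<in> car C" "\<tau> n = j x" using \<tau> by (auto simp: transport_def)
      then show ?thesis using inv_f_f[OF inj] by simp
    qed
    then have "\<tau> = (\<lambda>n. j (inv j (\<tau> n)))" and "\<forall>n. inv j (\<tau> n) \<in> car C"
      by auto
    then show "holds (transport j C) \<tau> p"
      using H holds_transport unfolding univ_true_def by metis
  qed
qed

lemma op_closed_transport: "op_closed C \<Longrightarrow> op_closed (transport j C)"
  by (auto simp: op_closed_def transport_def inj)

lemma reduct_transport: "reduct (transport j C) = transport j (reduct C)"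
  by (simp add: reduct_def transport_def inj)

lemma in_var_HA_transport: "in_var HA C \<Longrightarrow> in_var HA (transport j C)"
  using in_var_HA_iff op_closed_transport reduct_transport univ_true_transport by metis

lemma emb_transport: "emb K A D e \<Longrightarrow> emb K A (transport j D) (\<lambda>x. j (e x))"
  unfolding emb_def transport_def by (auto simp: inj inj_on_def inj_eq[OF inj])

lemma in_U_transport: "in_U K A D \<Longrightarrow> in_U K A (transport j D)"
  unfolding in_U_def using univ_true_transport by blast

end

(* The ultraproduct used below lives on 'a list => 'a; the theorem asks for an algebra on
   'a list set, so its elements are coded by their graphs. *)
definition list_graph :: "('a list \<Rightarrow> 'a) \<Rightarrow> 'a list set" where
  "list_graph f = {xs @ [f xs] | xs. True}"

lemma inj_list_graph: "inj list_graph"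
proof (rule injI)
  fix f g :: "'a list \<Rightarrow> 'a" assume "list_graph f = list_graph g"
  then have "xs @ [f xs] \<in> list_graph g" for xs unfolding list_graph_def by blast
  then show "f = g" unfolding list_graph_def by auto
qed

context impl_slat_fin_gen
begin

lemma in_var_HA_S_HA_span: "in_var HA S_HA"
  by (rule in_var_HA_S_HA[OF finite_span S_residuated_span])

lemma emb_ISL_S_HA: "emb ISL (reduct S_HA) A id"
  unfolding emb_def using span_car S_imp_span by auto

lemma emb_bISL_S_HA:
  assumes "bot_min A" and "bt A \<in> G"
  shows "emb bISL (reduct S_HA) A id"
proof -
  have "S_bot = bt A"
    by (rule S_bot_eqI[OF finite_span isl_generated.gen[OF assms(2)]])
      (use assms(1) span_car in \<open>auto simp: bot_min_def\<close>)
  then show ?thesis using emb_ISL_S_HA unfolding emb_def by simp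
qed

end

context pcdl_fin_gen
begin

lemma in_var_HA_S_HA_span: "in_var HA S_HA"
  by (rule in_var_HA_S_HA[OF finite_span S_residuated_span])

lemma emb_PDL_S_HA: "emb PDL (reduct S_HA) A id"
  unfolding emb_def using span_car S_join_span S_bot_span S_imp_bt_span by auto

end

lemma HA_principal_upset:
  assumes A: "in_var IL A" and m: "m \<in> car A"
  defines "C \<equiv> A\<lparr>car := {x \<in> car A. hle A m x}, bt := m\<rparr>"
  shows "in_var HA C" and "emb IL (reduct C) A id"
proof -
  interpret impl_slat A using A by unfold_locales (auto simp: is_lattice_def)
  have lat: "is_lattice A" using A by simp
  have C [simp]: "car C = {x \<in> car A. hle A m x}" "mt C = mt A" "jn C = jn A" "im C = im A"
    "bt C = m" "tp C = tp A" "hle C = hle A"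
    unfolding C_def by (simp_all add: hle_def [abs_def])
  have jn: "jn A x y \<in> car A" "hle A x (jn A x y)" if "x \<in> car A" "y \<in> car A" for x y
    using lat that unfolding is_lattice_def hle_def by blast+
  have up_mt: "hle A m (mt A x y)" if "x \<in> car C" "y \<in> car C" for x y
    using that m hle_mtI by simp
  have up_jn: "hle A m (jn A x y)" if "x \<in> car C" "y \<in> car C" for x y
    using that m hle_trans[of m x "jn A x y"] jn by simp
  have up_im: "hle A m (im A x y)" if "x \<in> car C" "y \<in> car C" for x y
    using that m hle_trans[of m y "im A x y"] hle_im by simp
  have "is_lattice C"
    using lat jn up_mt up_jn unfolding is_lattice_def meet_semilattice_def by auto
  moreover have "top_max C" "bot_min C" "residuated C"
    using top_max residuated m up_im unfolding top_max_def bot_min_def residuated_def by auto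
  ultimately show "in_var HA C" by simp
  show "emb IL (reduct C) A id" unfolding emb_def by auto
qed

lemma ex_HA_cover:
  fixes A :: "'a halg"
  assumes A: "in_var K A" and F: "finite F" "F \<subseteq> car A"
  shows "\<exists>C. in_var HA C \<and> F \<subseteq> car C \<and> emb K (reduct C) A id"
proof (cases K)
  case ISL
  interpret impl_slat_fin_gen A F using A ISL F by unfold_locales auto
  have "F \<subseteq> car S_HA" using isl_generated.gen by auto
  then show ?thesis using ISL in_var_HA_S_HA_span emb_ISL_S_HA by blast
next
  case bISL
  then have bt: "bot_min A" "bt A \<in> car A" using A by (auto simp: bot_min_def)
  interpret impl_slat_fin_gen A "insert (bt A) F" using A bISL F bt by unfold_locales auto
  have "F \<subseteq> car S_HA" by (auto intro: isl_generated.gen)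
  then show ?thesis using bISL in_var_HA_S_HA_span emb_bISL_S_HA[OF bt(1)] by blast
next
  case PDL
  interpret pcdl_fin_gen A F using A PDL F by unfold_locales (auto simp: is_lattice_def)
  have "F \<subseteq> car S_HA" using pdl_generated.gen by auto
  then show ?thesis using PDL in_var_HA_S_HA_span emb_PDL_S_HA by blast
next
  case IL
  interpret impl_slat A using A IL by unfold_locales (auto simp: is_lattice_def)
  obtain m where m: "m \<in> car A" "\<forall>x\<in>F. hle A m x" using ex_lower_bound[OF F] by blast
  let ?C = "A\<lparr>car := {x \<in> car A. hle A m x}, bt := m\<rparr>"
  have "F \<subseteq> car ?C" using F m by auto
  then show ?thesis using HA_principal_upset[of A m] A IL m(1) by blast
next
  case HA
  have "emb HA (reduct A) A id" by (simp add: emb_def)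
  then show ?thesis using A HA F by blast
qed

lemma ex_HA_covers_lists:
  fixes A :: "'a halg"
  assumes "in_var K A"
  obtains C :: "'a list \<Rightarrow> 'a halg"
  where "\<And>xs. in_var HA (C xs)" "\<And>xs. set xs \<inter> car A \<subseteq> car (C xs)" "\<And>xs. emb K (reduct (C xs)) A id"
proof -
  have "\<forall>xs. \<exists>C. in_var HA C \<and> set xs \<inter> car A \<subseteq> car C \<and> emb K (reduct C) A id"
    using ex_HA_cover[OF assms] by simp
  from choice[OF this] obtain C
    where "\<forall>xs. in_var HA (C xs) \<and> set xs \<inter> car A \<subseteq> car (C xs) \<and> emb K (reduct (C xs)) A id" ..
  then show ?thesis using that by (blast dest: spec)
qed

lemma ex_ultrafilter_lists_containing:
  "\<exists>U. ultrafilter U \<and> (\<forall>x\<in>X. eventually (\<lambda>xs. x \<in> set xs) U)"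
proof -
  define F where "F = (INF x\<in>X. principal {xs. x \<in> set xs})"
  have "F \<noteq> bot"
    unfolding F_def
  proof (rule INF_filter_not_bot)
    fix Y assume "Y \<subseteq> X" "finite Y"
    then obtain xs where "set xs = Y" using finite_list by blast
    then have "(\<Inter>x\<in>Y. {xs. x \<in> set xs}) \<noteq> {}" by auto
    then show "(INF x\<in>Y. principal {xs. x \<in> set xs}) \<noteq> bot"
      using \<open>finite Y\<close> by (simp add: INF_principal_finite principal_eq_bot_iff)
  qed
  then obtain U where U: "ultrafilter U" "U \<le> F" using ex_ultrafilter_le by blast
  have "eventually (\<lambda>xs. x \<in> set xs) U" if "x \<in> X" for x
    using U(2) by (rule filter_leD)
      (use that in \<open>auto simp: F_def eventually_principal intro: eventually_INF1\<close>)
  then show ?thesis using U(1) by blast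
qed

lemma (in ultrafilter) ultraproduct_of_HA_covers:
  assumes HA: "\<And>i. in_var HA (C i)" and emb: "\<And>i. emb K (reduct (C i)) A id"
    and eventually_in: "\<And>x. x \<in> car A \<Longrightarrow> eventually (\<lambda>i. x \<in> car (C i)) U"
  shows "in_var HA (ultraproduct U C)"
    and "emb K A (reduct (ultraproduct U C)) (\<lambda>x. ult_rep U (\<lambda>_. x))"
    and "in_U K A (reduct (ultraproduct U C))"
proof -
  show "in_var HA (ultraproduct U C)" by (rule in_var_HA_ultraproduct[OF HA])
  have "eventually (\<lambda>i. x \<in> car (reduct (C i))) U" if "x \<in> car A" for x
    using eventually_in[OF that] by simp
  then show "emb K A (reduct (ultraproduct U C)) (\<lambda>x. ult_rep U (\<lambda>_. x))"
    unfolding reduct_ultraproduct by (rule emb_diagonal[OF emb])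
  show "in_U K A (reduct (ultraproduct U C))"
    unfolding reduct_ultraproduct by (rule in_U_ultraproduct[OF emb op_closed_reduct[OF HA]])
qed

theorem theorem2p7:
  fixes K :: lang and A :: "'a halg"
  assumes "in_var K A"
  shows "\<exists>(B :: 'a list set halg) (e :: 'a \<Rightarrow> 'a list set).
           in_var HA B \<and> emb K A (reduct B) e \<and> in_U K A (reduct B)"
proof -
  obtain C where HA: "\<And>xs. in_var HA (C xs)" and cover: "\<And>xs. set xs \<inter> car A \<subseteq> car (C xs)"
    and emb: "\<And>xs. emb K (reduct (C xs)) A id"
    using ex_HA_covers_lists[OF assms] by blast
  obtain U where U: "ultrafilter U" "\<forall>x\<in>car A. eventually (\<lambda>xs. x \<in> set xs) U"
    using ex_ultrafilter_lists_containing[of "car A"] by blast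
  interpret ultrafilter U by (rule U(1))
  have "eventually (\<lambda>xs. x \<in> car (C xs)) U" if "x \<in> car A" for x
    using bspec[OF U(2) that] by eventually_elim (use cover that in blast)
  note B = ultraproduct_of_HA_covers[OF HA emb this]
  let ?B = "transport list_graph (ultraproduct U C)"
  have "in_var HA ?B" by (rule in_var_HA_transport[OF inj_list_graph B(1)])
  moreover have "emb K A (reduct ?B) (\<lambda>x. list_graph (ult_rep U (\<lambda>_. x)))"
    unfolding reduct_transport[OF inj_list_graph] by (rule emb_transport[OF inj_list_graph B(2)])
  moreover have "in_U K A (reduct ?B)"
    unfolding reduct_transport[OF inj_list_graph] by (rule in_U_transport[OF inj_list_graph B(3)])
  ultimately show ?thesis by blast
qed

end
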